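(* Let $n\ge1$, $0\le N_b\le N_h$ with $N_b+N_h\le n$, $p\in[0,1]$, $N_l=N_h-N_b>0$. Let $X\subseteq\mathbb{Z}/n\mathbb{Z}$ with $|X|=N_l$, listed as $(x_i)_{i\in\mathbb{Z}/N_l\mathbb{Z}}$, and $\ell_i=\Delta_iX$. For every $(b_i)_{i}$ with $\sum_ib_i=N_b$ and $0\le b_i\le\ell_i/2$ for all $i$, $$\mathbb{P}^{n,N_b,N_h,p}\left(H^1=X\ \middle|\ X\subseteq H^0\text{ and } \forall i,\ |B^0\cap I_i|=|H^0\cap I_i|=b_i\right)=\prod_{i\in\mathbb{Z}/N_l\mathbb{Z}}\mathbb{P}^{\ell_i+1,b_i,b_i+1,p}\left(H^1=\{0\}\mid 0\in H^0\right)=\prod_{i\in\mathbb{Z}/N_l\mathbb{Z}}\frac{1}{b_i+1},$$ where $I_i$ denotes the $i$-th block, i.e. the set of vertices strictly between $x_i$ and $x_{i+1}$.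
   Context: Golf process on $\mathbb{Z}/m\mathbb{Z}$ under $\mathbb{P}^{m,N_b,N_h,p}$: initial configuration uniform among assignments with exactly $N_b$ balls (set $B^0$) and $N_h$ holes (set $H^0$), the rest neutral; clocks i.i.d. uniform on $[0,1]$; at its clock time each ball performs an independent random walk (step $+1$ w.p. $p$, $-1$ w.p. $1-p$) stopped at the first not-yet-filled hole, which it fills. $H^1$ is the set of holes never filled. With $\pi:\mathbb{Z}/n\mathbb{Z}\to\{1,\dots,n\}$ the canonical bijection, $X$ of size $k$ is listed as $(x_i)_{i\in\mathbb{Z}/k\mathbb{Z}}$ with $\pi(x_1)<\dots<\pi(x_k)=\pi(x_0)$; the $i$-th block is the set of vertices visited strictly between $x_i$ and $x_{i+1}$ when going in the increasing direction, and $\Delta_iX=\pi(x_{i+1})-\pi(x_i)-1\bmod n$ is its size. *)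

theory Defs
  imports Complex_Main
begin

text \<open>Vertices of Z/mZ are represented by the natural numbers 0..m-1 (residues).\<close>

definition golf_step :: "nat \<Rightarrow> nat \<Rightarrow> bool \<Rightarrow> nat" where
  "golf_step m s d = (if d then (s + 1) mod m else (s + m - 1) mod m)"

fun walk_pos :: "nat \<Rightarrow> nat \<Rightarrow> bool list \<Rightarrow> nat" where
  "walk_pos m s [] = s"
| "walk_pos m s (d # w) = walk_pos m (golf_step m s d) w"

definition walk_weight :: "real \<Rightarrow> bool list \<Rightarrow> real" where
  "walk_weight p w = p ^ length (filter id w) * (1 - p) ^ length (filter Not w)"

text \<open>Probability that the random walk started at s (step +1 w.p. p, -1 w.p. 1-p)
  first enters the set U (at a time \<ge> 1) at the vertex h.\<close>
definition hit_prob :: "nat \<Rightarrow> real \<Rightarrow> nat set \<Rightarrow> nat \<Rightarrow> nat \<Rightarrow> real" where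
  "hit_prob m p U s h =
     (\<Sum>k. \<Sum>w\<in>{w::bool list. length w = Suc k}.
        (if walk_pos m s w = h \<and> h \<in> U \<and> (\<forall>j. 1 \<le> j \<and> j \<le> k \<longrightarrow> walk_pos m s (take j w) \<notin> U)
         then walk_weight p w else 0))"

text \<open>Given the set U of unfilled holes and the balls listed in the order of their clocks,
  golf_dist m p U bs Y is the probability that the final set of unfilled holes is Y.\<close>
fun golf_dist :: "nat \<Rightarrow> real \<Rightarrow> nat set \<Rightarrow> nat list \<Rightarrow> nat set \<Rightarrow> real" where
  "golf_dist m p U [] Y = (if Y = U then 1 else 0)"
| "golf_dist m p U (b # bs) Y = (\<Sum>h\<in>U. hit_prob m p U b h * golf_dist m p (U - {h}) bs Y)"

definition golf_configs :: "nat \<Rightarrow> nat \<Rightarrow> nat \<Rightarrow> (nat set \<times> nat set) set" where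
  "golf_configs m Nb Nh = {(B, H). B \<subseteq> {..<m} \<and> H \<subseteq> {..<m} \<and> B \<inter> H = {} \<and> card B = Nb \<and> card H = Nh}"

definition ball_orders :: "nat set \<Rightarrow> nat list set" where
  "ball_orders B = {bs. distinct bs \<and> set bs = B}"

text \<open>P^{m,Nb,Nh,p}(E) for an event E on (B0, H0, H1). The i.i.d. uniform clocks induce
  a uniformly random order of the balls (ties have probability 0).\<close>
definition golfP :: "nat \<Rightarrow> nat \<Rightarrow> nat \<Rightarrow> real \<Rightarrow> (nat set \<Rightarrow> nat set \<Rightarrow> nat set \<Rightarrow> bool) \<Rightarrow> real" where
  "golfP m Nb Nh p E =
     (\<Sum>(B, H)\<in>golf_configs m Nb Nh.
        (\<Sum>bs\<in>ball_orders B. \<Sum>Y\<in>Pow H. if E B H Y then golf_dist m p H bs Y else 0)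
          / real (card (ball_orders B)))
     / real (card (golf_configs m Nb Nh))"

definition golfCP :: "nat \<Rightarrow> nat \<Rightarrow> nat \<Rightarrow> real \<Rightarrow> (nat set \<Rightarrow> nat set \<Rightarrow> nat set \<Rightarrow> bool)
    \<Rightarrow> (nat set \<Rightarrow> nat set \<Rightarrow> nat set \<Rightarrow> bool) \<Rightarrow> real" where
  "golfCP m Nb Nh p E C = golfP m Nb Nh p (\<lambda>B H Y. E B H Y \<and> C B H Y) / golfP m Nb Nh p C"

definition canon_pi :: "nat \<Rightarrow> nat \<Rightarrow> nat" where
  "canon_pi n x = (if x = 0 then n else x)"

text \<open>x_1, ..., x_k listed with increasing pi (list positions 0..k-1).\<close>
definition xlist :: "nat \<Rightarrow> nat set \<Rightarrow> nat list" where
  "xlist n X = map (\<lambda>a. a mod n) (sorted_list_of_set (canon_pi n ` X))"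

text \<open>x_i for i \<in> Z/kZ represented by {0..<k}; x_0 = x_k.\<close>
definition xpt :: "nat \<Rightarrow> nat set \<Rightarrow> nat \<Rightarrow> nat" where
  "xpt n X i = xlist n X ! ((i + card X - 1) mod card X)"

definition Delta :: "nat \<Rightarrow> nat set \<Rightarrow> nat \<Rightarrow> nat" where
  "Delta n X i = nat ((int (canon_pi n (xpt n X ((i + 1) mod card X)))
                      - int (canon_pi n (xpt n X i)) - 1) mod int n)"

definition block :: "nat \<Rightarrow> nat set \<Rightarrow> nat \<Rightarrow> nat set" where
  "block n X i = {(xpt n X i + j) mod n | j. 1 \<le> j \<and> j \<le> Delta n X i}"

end

(* A ball released
   in the i-th gap walks exactly as on the cycle with Delta_i + 1 vertices in which the vertex 0
   stands for both end points of the gap, which are holes of X: it stops at an end point exactly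
   when the small walk stops at 0.  Hence H^1 = X means that the hole 0 survives on every small
   cycle.  Recursing over the ball with the smallest clock, which lies in some gap and must fill a
   hole inside that gap, shows that the probability of this factorizes over the gaps.  On a small
   cycle with b balls and b + 1 holes exactly one hole survives, and by rotation invariance every
   hole of H^0 is equally likely to be the survivor, so 0 survives with probability 1 / (b + 1). *)

theory Submission
  imports Defs "HOL-Combinatorics.Multiset_Permutations" "HOL-Library.FuncSet"
begin

section \<open>Walks on the cycle\<close>

lemma walk_pos_append: "walk_pos m s (u @ v) = walk_pos m (walk_pos m s u) v"
  by (induction u arbitrary: s) auto

lemma walk_pos_snoc: "walk_pos m s (u @ [d]) = golf_step m (walk_pos m s u) d"
  by (simp add: walk_pos_append)

lemma walk_weight_append: "walk_weight p (u @ v) = walk_weight p u * walk_weight p v"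
  by (simp add: walk_weight_def power_add)

lemma walk_weight_nonneg: "0 \<le> p \<Longrightarrow> p \<le> 1 \<Longrightarrow> 0 \<le> walk_weight p w"
  by (simp add: walk_weight_def)

lemma finite_bool_lists_length: "finite {w::bool list. length w = k}"
  using finite_lists_length_eq[of "UNIV :: bool set" k] by simp

lemma sum_bool_lists_length_add:
  "(\<Sum>w\<in>{w::bool list. length w = a + b}. f w) =
   (\<Sum>u\<in>{u. length u = a}. \<Sum>v\<in>{v. length v = b}. f (u @ v))"
proof -
  let ?A = "{u::bool list. length u = a}" and ?B = "{v::bool list. length v = b}"
  have "{w::bool list. length w = a + b} = (\<lambda>(u, v). u @ v) ` (?A \<times> ?B)"
  proof (intro set_eqI iffI)
    fix w :: "bool list" assume "w \<in> {w. length w = a + b}"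
    then show "w \<in> (\<lambda>(u, v). u @ v) ` (?A \<times> ?B)"
      by (intro image_eqI[of _ _ "(take a w, drop a w)"]) auto
  qed auto
  moreover have "inj_on (\<lambda>(u, v). u @ v) (?A \<times> ?B)"
    by (auto simp: inj_on_def)
  ultimately show ?thesis
    by (simp add: sum.reindex sum.cartesian_product split_def)
qed

lemma sum_bool_lists_length_Suc:
  "(\<Sum>w\<in>{w::bool list. length w = Suc k}. f w) =
   (\<Sum>u\<in>{u. length u = k}. f (u @ [True]) + f (u @ [False]))"
proof -
  have "{v::bool list. length v = 1} = {[True], [False]}"
    by (auto simp: length_Suc_conv)
  then show ?thesis
    using sum_bool_lists_length_add[where a=k and b=1 and f=f] by (simp add: sum.distrib)
qed

lemma sum_walk_weight: "(\<Sum>w\<in>{w::bool list. length w = k}. walk_weight p w) = 1"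
proof (induction k)
  case 0
  have "{w::bool list. length w = 0} = {[]}" by auto
  then show ?case by (simp add: walk_weight_def)
next
  case (Suc k)
  then show ?case
    by (simp add: sum_bool_lists_length_Suc walk_weight_append walk_weight_def algebra_simps)
qed

definition vertex :: "nat \<Rightarrow> int \<Rightarrow> nat" where
  "vertex m z = nat (z mod int m)"

lemma vertex_lt: "m \<ge> 1 \<Longrightarrow> vertex m z < m"
  by (simp add: vertex_def nat_less_iff)

lemma int_vertex: "m \<ge> 1 \<Longrightarrow> int (vertex m z) = z mod int m"
  by (simp add: vertex_def)

lemma vertex_of_nat: "vertex m (int x) = x mod m"
  by (simp add: vertex_def flip: zmod_int)

lemma vertex_eq_iff: "m \<ge> 1 \<Longrightarrow> vertex m z = vertex m z' \<longleftrightarrow> z mod int m = z' mod int m"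
  by (metis int_vertex of_nat_eq_iff)

lemma vertex_add_self: "vertex m (z + int m) = vertex m z"
  by (simp add: vertex_def)

lemma golf_step_eq_vertex: "m \<ge> 1 \<Longrightarrow> golf_step m x d = vertex m (int x + (if d then 1 else -1))"
proof (cases d)
  case True
  then show ?thesis
    by (simp add: golf_step_def add.commute flip: vertex_of_nat)
next
  case False
  assume "m \<ge> 1"
  then have "int (x + m - 1) = int x - 1 + int m" by simp
  then show ?thesis
    using False by (simp add: golf_step_def vertex_add_self flip: vertex_of_nat)
qed

lemma golf_step_vertex: "m \<ge> 1 \<Longrightarrow> golf_step m (vertex m z) d = vertex m (z + (if d then 1 else -1))"
  by (simp add: golf_step_eq_vertex int_vertex vertex_eq_iff mod_add_left_eq)

lemma walk_pos_vertex:
  "m \<ge> 1 \<Longrightarrow> walk_pos m (vertex m z) w = vertex m (z + int (length (filter id w)) - int (length (filter Not w)))"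
  by (induction w arbitrary: z) (auto simp: golf_step_vertex algebra_simps)

lemma walk_pos_replicate:
  assumes "m \<ge> 1"
  shows "walk_pos m x (replicate (Suc j) d) = vertex m (if d then int x + int (Suc j) else int x - int (Suc j))"
  using walk_pos_vertex[OF assms, of "int x + (if d then 1 else -1)" "replicate j d"]
  by (simp add: golf_step_eq_vertex[OF assms] algebra_simps)

lemma walk_pos_replicate_visits:
  assumes m: "m \<ge> 1" and h: "h < m"
  shows "\<exists>j\<in>{1..m}. walk_pos m x (replicate j d) = h"
proof -
  define r where "r = nat ((if d then int h - int x - 1 else int x - int h - 1) mod int m)"
  have r: "r < m" "int r = (if d then int h - int x - 1 else int x - int h - 1) mod int m"
    using m by (auto simp: r_def nat_less_iff)
  have "(if d then int x + int (Suc r) else int x - int (Suc r)) mod int m = int h mod int m"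
  proof (cases d)
    case True
    have "(int x + int (Suc r)) mod int m = ((int h - int x - 1) mod int m + (int x + 1)) mod int m"
      using r(2) True by (simp add: algebra_simps)
    also have "\<dots> = int h mod int m" by (simp add: mod_add_left_eq)
    finally show ?thesis using True by simp
  next
    case False
    have "(int x - int (Suc r)) mod int m = (int x - 1 - (int x - int h - 1) mod int m) mod int m"
      using r(2) False by (simp add: algebra_simps)
    also have "\<dots> = int h mod int m" by (simp add: mod_diff_right_eq)
    finally show ?thesis using False by simp
  qed
  then have "walk_pos m x (replicate (Suc r) d) = h"
    using h by (simp only: walk_pos_replicate[OF m] vertex_def) simp
  then show ?thesis
    using r(1) by (intro bexI[of _ "Suc r"]) auto
qed

lemma golf_step_interior:
  assumes "1 \<le> t" "t \<le> L"
  shows "golf_step (L + 1) t d = (if d then (if t = L then 0 else t + 1) else t - 1)"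
proof (cases d)
  case False
  have "t + (L + 1) - 1 = (t - 1) + (L + 1)"
    using assms by simp
  then have "(t + (L + 1) - 1) mod (L + 1) = t - 1"
    using assms by (simp only: mod_add_self2) simp
  then show ?thesis
    using False by (simp add: golf_step_def)
qed (use assms in \<open>simp add: golf_step_def\<close>)

section \<open>The walk reaches every nonempty set\<close>

definition avoids :: "nat \<Rightarrow> nat set \<Rightarrow> nat \<Rightarrow> nat \<Rightarrow> bool list \<Rightarrow> bool" where
  "avoids m U s k w \<longleftrightarrow> (\<forall>j. 1 \<le> j \<and> j \<le> k \<longrightarrow> walk_pos m s (take j w) \<notin> U)"

definition avoid_prob :: "nat \<Rightarrow> real \<Rightarrow> nat set \<Rightarrow> nat \<Rightarrow> nat \<Rightarrow> real" where
  "avoid_prob m p U s k = (\<Sum>w\<in>{w. length w = k}. if avoids m U s k w then walk_weight p w else 0)"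

definition first_entry_prob :: "nat \<Rightarrow> real \<Rightarrow> nat set \<Rightarrow> nat \<Rightarrow> nat \<Rightarrow> real" where
  "first_entry_prob m p U s k =
     (\<Sum>w\<in>{w. length w = Suc k}. if walk_pos m s w \<in> U \<and> avoids m U s k w then walk_weight p w else 0)"

lemma avoids_append: "length w = k \<Longrightarrow> avoids m U s k (w @ v) = avoids m U s k w"
  unfolding avoids_def by auto

lemma avoids_Suc:
  "length w = Suc k \<Longrightarrow> avoids m U s (Suc k) w \<longleftrightarrow> avoids m U s k w \<and> walk_pos m s w \<notin> U"
  unfolding avoids_def by (auto simp: le_Suc_eq)

lemma avoids_mono: "k' \<le> k \<Longrightarrow> avoids m U s k w \<Longrightarrow> avoids m U s k' w"
  unfolding avoids_def by auto

lemma avoids_snoc: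
  "avoids m U s (length (w @ [d])) (w @ [d]) \<longleftrightarrow> avoids m U s (length w) w \<and> walk_pos m s (w @ [d]) \<notin> U"
  using avoids_Suc[of "w @ [d]" "length w"] avoids_append[of w "length w"] by simp

lemma avoid_prob_0: "avoid_prob m p U s 0 = 1"
proof -
  have "{w::bool list. length w = 0} = {[]}" by auto
  then show ?thesis by (simp add: avoid_prob_def avoids_def walk_weight_def)
qed

lemma avoid_prob_Suc: "avoid_prob m p U s (Suc k) + first_entry_prob m p U s k = avoid_prob m p U s k"
proof -
  have "avoid_prob m p U s (Suc k) + first_entry_prob m p U s k =
     (\<Sum>w\<in>{w. length w = Suc k}. if avoids m U s k w then walk_weight p w else 0)"
    unfolding avoid_prob_def first_entry_prob_def sum.distrib[symmetric]
    by (rule sum.cong[OF refl]) (auto simp: avoids_Suc)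
  also have "\<dots> = avoid_prob m p U s k"
    unfolding avoid_prob_def sum_bool_lists_length_Suc
    by (rule sum.cong[OF refl]) (auto simp: avoids_append walk_weight_append walk_weight_def algebra_simps)
  finally show ?thesis .
qed

lemma avoid_prob_nonneg: "0 \<le> p \<Longrightarrow> p \<le> 1 \<Longrightarrow> 0 \<le> avoid_prob m p U s k"
  unfolding avoid_prob_def by (rule sum_nonneg) (auto simp: walk_weight_nonneg)

lemma first_entry_prob_nonneg: "0 \<le> p \<Longrightarrow> p \<le> 1 \<Longrightarrow> 0 \<le> first_entry_prob m p U s k"
  unfolding first_entry_prob_def by (rule sum_nonneg) (auto simp: walk_weight_nonneg)

lemma decseq_avoid_prob:
  assumes "0 \<le> p" "p \<le> 1"
  shows "decseq (avoid_prob m p U s)"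
proof (rule decseq_SucI)
  fix k
  show "avoid_prob m p U s (Suc k) \<le> avoid_prob m p U s k"
    using avoid_prob_Suc[of m p U s k] first_entry_prob_nonneg[OF assms, of m U s k] by linarith
qed

lemma sum_first_entry_prob: "(\<Sum>k<K. first_entry_prob m p U s k) = 1 - avoid_prob m p U s K"
proof (induction K)
  case 0
  then show ?case by (simp add: avoid_prob_0)
next
  case (Suc K)
  then show ?case using avoid_prob_Suc[of m p U s K] by simp
qed

lemma not_avoids_append_replicate:
  assumes "m \<ge> 1" "h \<in> U" "h < m" "length u = K"
  shows "\<not> avoids m U s (K + m) (u @ replicate m d)"
proof
  assume avoids: "avoids m U s (K + m) (u @ replicate m d)"
  obtain j where j: "j \<in> {1..m}" "walk_pos m (walk_pos m s u) (replicate j d) = h"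
    using walk_pos_replicate_visits[OF assms(1,3)] by blast
  have "take (K + j) (u @ replicate m d) = u @ replicate j d"
    using j(1) assms(4) by simp
  then have "walk_pos m s (take (K + j) (u @ replicate m d)) = h"
    using j(2) by (simp add: walk_pos_append)
  then show False
    using avoids j(1) assms(2) unfolding avoids_def by auto
qed

lemma sum_walk_weight_not_replicate:
  assumes "m \<ge> 1"
  shows "(\<Sum>v\<in>{v::bool list. length v = m}.
            if v \<in> {replicate m True, replicate m False} then 0 else walk_weight p v)
         = 1 - p ^ m - (1 - p) ^ m"
proof -
  let ?L = "{v::bool list. length v = m}" and ?R = "{replicate m True, replicate m False}"
  have "replicate m True \<noteq> replicate m False"
    using assms by (cases m) auto
  then have "(\<Sum>v\<in>?R. walk_weight p v) = p ^ m + (1 - p) ^ m"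
    by (simp add: walk_weight_def)
  moreover have "(\<Sum>v\<in>?L. walk_weight p v) =
      (\<Sum>v\<in>?L. if v \<in> ?R then walk_weight p v else 0) + (\<Sum>v\<in>?L. if v \<in> ?R then 0 else walk_weight p v)"
    by (subst sum.distrib[symmetric]) (rule sum.cong, auto)
  moreover have "(\<Sum>v\<in>?L. if v \<in> ?R then walk_weight p v else 0) = (\<Sum>v\<in>?R. walk_weight p v)"
    using sum.inter_restrict[OF finite_bool_lists_length[of m], of "walk_weight p" ?R]
    by (simp add: Int_absorb1)
  ultimately show ?thesis
    using sum_walk_weight[of p m] by linarith
qed

text \<open>Of the continuations by \<open>m\<close> steps, the two constant ones certainly hit \<open>U\<close>.\<close>
lemma avoid_prob_contract:
  assumes "m \<ge> 1" "0 \<le> p" "p \<le> 1" "h \<in> U" "h < m"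
  shows "avoid_prob m p U s (K + m) \<le> (1 - p ^ m - (1 - p) ^ m) * avoid_prob m p U s K"
proof -
  let ?R = "{replicate m True, replicate m False}"
  have "avoid_prob m p U s (K + m) = (\<Sum>u\<in>{u. length u = K}. \<Sum>v\<in>{v. length v = m}.
          if avoids m U s (K + m) (u @ v) then walk_weight p u * walk_weight p v else 0)"
    unfolding avoid_prob_def by (subst sum_bool_lists_length_add) (simp only: walk_weight_append)
  also have "\<dots> \<le> (\<Sum>u\<in>{u. length u = K}. \<Sum>v\<in>{v::bool list. length v = m}.
          if avoids m U s K u then walk_weight p u * (if v \<in> ?R then 0 else walk_weight p v) else 0)"
  proof (intro sum_mono)
    fix u v :: "bool list"
    assume "u \<in> {u. length u = K}"
    then have "avoids m U s (K + m) (u @ v) \<Longrightarrow> avoids m U s K u \<and> v \<notin> ?R"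
      using not_avoids_append_replicate[OF assms(1,4,5)] avoids_mono[of K "K + m"] avoids_append
      by fastforce
    then show "(if avoids m U s (K + m) (u @ v) then walk_weight p u * walk_weight p v else 0)
        \<le> (if avoids m U s K u then walk_weight p u * (if v \<in> ?R then 0 else walk_weight p v) else 0)"
      using walk_weight_nonneg[OF assms(2,3)] by auto
  qed
  also have "\<dots> = (1 - p ^ m - (1 - p) ^ m) * avoid_prob m p U s K"
    unfolding avoid_prob_def sum_distrib_left
  proof (rule sum.cong[OF refl])
    fix u
    show "(\<Sum>v\<in>{v. length v = m}. if avoids m U s K u
            then walk_weight p u * (if v \<in> ?R then 0 else walk_weight p v) else 0)
        = (1 - p ^ m - (1 - p) ^ m) * (if avoids m U s K u then walk_weight p u else 0)"
      using sum_walk_weight_not_replicate[OF assms(1), of p]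
      by (simp add: sum_distrib_left[symmetric] del: insert_iff)
  qed
  finally show ?thesis .
qed

lemma avoid_prob_tendsto_0:
  assumes "m \<ge> 1" "0 \<le> p" "p \<le> 1" "h \<in> U" "h < m"
  shows "avoid_prob m p U s \<longlonglongrightarrow> 0"
proof -
  define c where "c = 1 - p ^ m - (1 - p) ^ m"
  have "c < 1"
  proof (cases "p = 0")
    case False
    then have "0 < p ^ m" using assms(2) by simp
    moreover have "0 \<le> (1 - p) ^ m" using assms(3) by simp
    ultimately show ?thesis by (simp add: c_def)
  qed (use assms(1) in \<open>simp add: c_def power_0_left\<close>)
  obtain L where L: "avoid_prob m p U s \<longlonglongrightarrow> L"
    using decseq_convergent[OF decseq_avoid_prob[OF assms(2,3)]] avoid_prob_nonneg[OF assms(2,3)] by metis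
  have "L \<le> c * L"
  proof (rule LIMSEQ_le)
    show "(\<lambda>K. avoid_prob m p U s (K + m)) \<longlonglongrightarrow> L"
      using LIMSEQ_ignore_initial_segment[OF L] .
    show "(\<lambda>K. c * avoid_prob m p U s K) \<longlonglongrightarrow> c * L"
      using tendsto_mult_left[OF L] .
    show "\<exists>N. \<forall>K\<ge>N. avoid_prob m p U s (K + m) \<le> c * avoid_prob m p U s K"
      using avoid_prob_contract[OF assms] c_def by blast
  qed
  moreover have "0 \<le> L"
    using LIMSEQ_le_const[OF L] avoid_prob_nonneg[OF assms(2,3)] by blast
  ultimately have "L = 0"
    using \<open>c < 1\<close> by (smt (verit) mult_le_cancel_right1)
  with L show ?thesis by simp
qed

lemma first_entry_prob_sums:
  assumes "m \<ge> 1" "0 \<le> p" "p \<le> 1" "h \<in> U" "h < m"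
  shows "first_entry_prob m p U s sums 1"
  unfolding sums_def sum_first_entry_prob
  using tendsto_diff[OF tendsto_const avoid_prob_tendsto_0[OF assms]] by simp

definition hits_first :: "nat \<Rightarrow> nat set \<Rightarrow> nat \<Rightarrow> nat \<Rightarrow> nat \<Rightarrow> bool list \<Rightarrow> bool" where
  "hits_first m U s h k w \<longleftrightarrow> walk_pos m s w = h \<and> h \<in> U \<and> avoids m U s k w"

lemma hits_first_snoc:
  "length v = j \<Longrightarrow>
    hits_first m U s h j (v @ [d]) \<longleftrightarrow> walk_pos m s (v @ [d]) = h \<and> h \<in> U \<and> avoids m U s j v"
  unfolding hits_first_def by (simp add: avoids_append)

lemma hit_prob_hits_first:
  "hit_prob m p U s h =
     (\<Sum>k. \<Sum>w\<in>{w. length w = Suc k}. if hits_first m U s h k w then walk_weight p w else 0)"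
  unfolding hit_prob_def hits_first_def avoids_def ..

lemma hit_prob_cong:
  assumes "\<And>k w. length w = Suc k \<Longrightarrow> hits_first m U s h k w \<longleftrightarrow> hits_first m' U' s' h' k w"
  shows "hit_prob m p U s h = hit_prob m' p U' s' h'"
  unfolding hit_prob_hits_first using assms by (intro arg_cong[where f=suminf] ext sum.cong) auto

lemma hit_prob_eq_0:
  assumes "\<And>k w. length w = Suc k \<Longrightarrow> \<not> hits_first m U s h k w"
  shows "hit_prob m p U s h = 0"
  unfolding hit_prob_hits_first using assms by simp

lemma sum_hit_prob:
  assumes "m \<ge> 1" "0 \<le> p" "p \<le> 1" "U \<noteq> {}" "U \<subseteq> {..<m}"
  shows "(\<Sum>h\<in>U. hit_prob m p U s h) = 1"
proof -
  obtain h0 where h0: "h0 \<in> U" "h0 < m" using assms(4,5) by blast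
  have fU: "finite U" using assms(5) finite_subset by blast
  define T where "T h k = (\<Sum>w\<in>{w. length w = Suc k}.
      if hits_first m U s h k w then walk_weight p w else 0)" for h k
  have T_nonneg: "0 \<le> T h k" for h k
    unfolding T_def by (rule sum_nonneg) (simp add: walk_weight_nonneg[OF assms(2,3)])
  have sum_T: "(\<Sum>h\<in>U. T h k) = first_entry_prob m p U s k" for k
  proof -
    have "(\<Sum>h\<in>U. T h k) = (\<Sum>w\<in>{w. length w = Suc k}. \<Sum>h\<in>U.
        if h = walk_pos m s w then (if avoids m U s k w then walk_weight p w else 0) else 0)"
      unfolding T_def hits_first_def by (subst sum.swap) (intro sum.cong refl, auto)
    also have "\<dots> = first_entry_prob m p U s k"
      unfolding first_entry_prob_def using fU by (simp add: sum.delta) (intro sum.cong, auto)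
    finally show ?thesis .
  qed
  have "summable (T h)" if "h \<in> U" for h
  proof (rule summable_comparison_test'[where N=0])
    show "summable (first_entry_prob m p U s)"
      using first_entry_prob_sums[OF assms(1-3) h0] sums_summable by blast
    show "norm (T h k) \<le> first_entry_prob m p U s k" for k
      using member_le_sum[OF that, of "\<lambda>h. T h k", OF _ fU] T_nonneg sum_T by simp
  qed
  then have "(\<Sum>h\<in>U. hit_prob m p U s h) = (\<Sum>k. \<Sum>h\<in>U. T h k)"
    unfolding hit_prob_hits_first T_def[symmetric] by (simp add: suminf_sum)
  also have "\<dots> = 1"
    using sum_T sums_unique[OF first_entry_prob_sums[OF assms(1-3) h0]] by simp
  finally show ?thesis .
qed

section \<open>Distribution of the unfilled holes\<close>

definition final_holes_prob :: "nat \<Rightarrow> real \<Rightarrow> nat set \<Rightarrow> nat set \<Rightarrow> nat set \<Rightarrow> real" where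
  "final_holes_prob m p U B Y =
     (\<Sum>bs\<in>ball_orders B. golf_dist m p U bs Y) / real (card (ball_orders B))"

lemma ball_orders_eq_permutations_of_set: "ball_orders B = permutations_of_set B"
  by (auto simp: ball_orders_def permutations_of_set_def)

lemma final_holes_prob_empty: "final_holes_prob m p U {} Y = (if Y = U then 1 else 0)"
  by (simp add: final_holes_prob_def ball_orders_eq_permutations_of_set)

lemma sum_permutations_of_set_Cons:
  assumes "finite B" "B \<noteq> {}"
  shows "(\<Sum>bs\<in>permutations_of_set B. f bs) = (\<Sum>b\<in>B. \<Sum>bs\<in>permutations_of_set (B - {b}). f (b # bs))"
proof -
  have "(\<Sum>bs\<in>permutations_of_set B. f bs) =
      (\<Sum>b\<in>B. \<Sum>bs\<in>(\<lambda>xs. b # xs) ` permutations_of_set (B - {b}). f bs)"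
    unfolding permutations_of_set_nonempty[OF assms(2)] by (rule sum.UNION_disjoint) (use assms in auto)
  then show ?thesis
    by (simp add: sum.reindex inj_on_def)
qed

lemma final_holes_prob_first_ball:
  assumes "finite B"
  shows "real (card B) * final_holes_prob m p U B Y =
    (\<Sum>b\<in>B. \<Sum>h\<in>U. hit_prob m p U b h * final_holes_prob m p (U - {h}) (B - {b}) Y)"
proof (cases "B = {}")
  case False
  define F where "F b h = hit_prob m p U b h * final_holes_prob m p (U - {h}) (B - {b}) Y" for b h
  have fact_B: "(fact (card B) :: real) = real (card B) * fact (card B - 1)"
    using False assms by (metis card_gt_0_iff fact_num_eq_if of_nat_eq_0_iff zero_less_iff_neq_zero)
  have "(\<Sum>bs\<in>permutations_of_set B. golf_dist m p U bs Y) =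
      (\<Sum>b\<in>B. \<Sum>bs\<in>permutations_of_set (B - {b}). \<Sum>h\<in>U.
         hit_prob m p U b h * golf_dist m p (U - {h}) bs Y)"
    by (simp add: sum_permutations_of_set_Cons[OF assms False])
  also have "\<dots> = (\<Sum>b\<in>B. (\<Sum>h\<in>U. F b h) * fact (card B - 1))"
  proof (intro sum.cong refl)
    fix b assume "b \<in> B"
    then have "real (card (permutations_of_set (B - {b}))) = fact (card B - 1)"
      using assms by simp
    then show "(\<Sum>bs\<in>permutations_of_set (B - {b}). \<Sum>h\<in>U. hit_prob m p U b h * golf_dist m p (U - {h}) bs Y) =
        (\<Sum>h\<in>U. F b h) * fact (card B - 1)"
      unfolding sum_distrib_right F_def
      by (subst sum.swap) (simp add: final_holes_prob_def ball_orders_eq_permutations_of_set sum_distrib_left)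
  qed
  finally show ?thesis
    using assms unfolding F_def
    by (simp add: final_holes_prob_def ball_orders_eq_permutations_of_set fact_B flip: sum_distrib_right)
qed simp

lemma golf_dist_nonzero:
  "finite U \<Longrightarrow> golf_dist m p U bs Y \<noteq> 0 \<Longrightarrow> Y \<subseteq> U \<and> card Y + length bs = card U"
proof (induction bs arbitrary: U)
  case (Cons b bs)
  then obtain h where h: "h \<in> U" "golf_dist m p (U - {h}) bs Y \<noteq> 0"
    by (auto elim: sum.not_neutral_contains_not_neutral)
  with Cons.IH[of "U - {h}"] Cons.prems have "Y \<subseteq> U - {h} \<and> card Y + length bs = card (U - {h})"
    by auto
  moreover have "card U \<ge> 1"
    using h(1) Cons.prems(1) by (metis One_nat_def Suc_leI card_gt_0_iff empty_iff)
  ultimately show ?case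
    using h Cons.prems by auto
qed (auto split: if_splits)

lemma final_holes_prob_nonzero:
  assumes "finite U" "final_holes_prob m p U B Y \<noteq> 0"
  shows "Y \<subseteq> U \<and> card Y + card B = card U"
proof -
  obtain bs where bs: "bs \<in> ball_orders B" "golf_dist m p U bs Y \<noteq> 0"
    using assms(2) unfolding final_holes_prob_def by (auto elim: sum.not_neutral_contains_not_neutral)
  then have "length bs = card B"
    by (simp add: ball_orders_eq_permutations_of_set length_finite_permutations_of_set)
  with golf_dist_nonzero[OF assms(1) bs(2)] show ?thesis
    by simp
qed

lemma final_holes_prob_eq_0: "finite U \<Longrightarrow> \<not> Y \<subseteq> U \<Longrightarrow> final_holes_prob m p U B Y = 0"
  using final_holes_prob_nonzero by blast

lemma final_holes_prob_first_ball_Diff: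
  assumes "finite B" "finite U"
  shows "real (card B) * final_holes_prob m p U B Y =
    (\<Sum>b\<in>B. \<Sum>h\<in>U - Y. hit_prob m p U b h * final_holes_prob m p (U - {h}) (B - {b}) Y)"
  unfolding final_holes_prob_first_ball[OF assms(1)]
  by (rule sum.cong[OF refl], rule sum.mono_neutral_right)
     (use assms(2) in \<open>auto dest: final_holes_prob_nonzero[rotated]\<close>)

lemma sum_golf_dist:
  assumes "m \<ge> 1" "0 \<le> p" "p \<le> 1" "H \<subseteq> {..<m}" "U \<subseteq> H" "length bs < card U"
  shows "(\<Sum>Y\<in>Pow H. golf_dist m p U bs Y) = 1"
  using assms(5,6)
proof (induction bs arbitrary: U)
  case Nil
  have "finite H" using assms(4) finite_subset by blast
  then show ?case using Nil by (simp add: sum.delta')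
next
  case (Cons b bs)
  have "finite U"
    using Cons.prems(1) assms(4) by (meson finite_lessThan finite_subset)
  have "(\<Sum>Y\<in>Pow H. golf_dist m p U (b # bs) Y) =
      (\<Sum>h\<in>U. hit_prob m p U b h * (\<Sum>Y\<in>Pow H. golf_dist m p (U - {h}) bs Y))"
    by (simp add: sum_distrib_left sum.swap[of _ "Pow H"])
  also have "\<dots> = (\<Sum>h\<in>U. hit_prob m p U b h)"
    by (rule sum.cong[OF refl], subst Cons.IH) (use Cons.prems \<open>finite U\<close> in auto)
  also have "\<dots> = 1"
    using Cons.prems assms by (intro sum_hit_prob) auto
  finally show ?case .
qed

lemma sum_final_holes_prob:
  assumes "m \<ge> 1" "0 \<le> p" "p \<le> 1" "H \<subseteq> {..<m}" "U \<subseteq> H" "card B < card U" "finite B"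
  shows "(\<Sum>Y\<in>Pow H. final_holes_prob m p U B Y) = 1"
proof -
  have "(\<Sum>Y\<in>Pow H. final_holes_prob m p U B Y) =
      (\<Sum>bs\<in>ball_orders B. \<Sum>Y\<in>Pow H. golf_dist m p U bs Y) / real (card (ball_orders B))"
    unfolding final_holes_prob_def by (simp add: sum_divide_distrib sum.swap[of _ "Pow H"])
  also have "\<dots> = 1"
    using assms sum_golf_dist[OF assms(1-5)]
    by (simp add: ball_orders_eq_permutations_of_set length_finite_permutations_of_set)
  finally show ?thesis .
qed

lemma golfP_final_holes_prob:
  "golfP m Nb Nh p E =
     (\<Sum>(B, H)\<in>golf_configs m Nb Nh. \<Sum>Y\<in>Pow H. if E B H Y then final_holes_prob m p H B Y else 0)
     / real (card (golf_configs m Nb Nh))"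
proof -
  have "(\<Sum>bs\<in>ball_orders B. \<Sum>Y\<in>Pow H. if E B H Y then golf_dist m p H bs Y else 0)
          / real (card (ball_orders B))
      = (\<Sum>Y\<in>Pow H. if E B H Y then final_holes_prob m p H B Y else 0)" for B H
    unfolding final_holes_prob_def sum_divide_distrib
    by (subst sum.swap) (auto intro: sum.cong)
  then show ?thesis
    unfolding golfP_def by simp
qed

section \<open>Conditional probabilities\<close>

lemma finite_golf_configs: "finite (golf_configs m Nb Nh)"
proof -
  have "golf_configs m Nb Nh \<subseteq> Pow {..<m} \<times> Pow {..<m}"
    by (auto simp: golf_configs_def)
  then show ?thesis by (rule finite_subset) auto
qed

lemma golfP_final_holes_conj:
  assumes "\<And>B H. C B H \<Longrightarrow> X \<subseteq> H"
  shows "golfP m Nb Nh p (\<lambda>B H Y. Y = X \<and> C B H) =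
    (\<Sum>c\<in>{c \<in> golf_configs m Nb Nh. C (fst c) (snd c)}. final_holes_prob m p (snd c) (fst c) X)
    / real (card (golf_configs m Nb Nh))"
proof -
  have "(\<Sum>Y\<in>Pow H. if Y = X \<and> C B H then final_holes_prob m p H B Y else 0) =
      (if C B H then final_holes_prob m p H B X else 0)" if "(B, H) \<in> golf_configs m Nb Nh" for B H
  proof -
    have "finite (Pow H)"
      using that by (auto simp: golf_configs_def intro: finite_subset)
    then show ?thesis
      using assms[of B H] by (simp add: sum.delta)
  qed
  then show ?thesis
    unfolding golfP_final_holes_prob
    by (simp add: sum.inter_filter[OF finite_golf_configs] split_def cong: sum.cong)
qed

lemma golfP_config_event:
  assumes "m \<ge> 1" "0 \<le> p" "p \<le> 1" "Nb < Nh"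
  shows "golfP m Nb Nh p (\<lambda>B H Y. C B H) =
    real (card {c \<in> golf_configs m Nb Nh. C (fst c) (snd c)}) / real (card (golf_configs m Nb Nh))"
proof -
  have "(\<Sum>Y\<in>Pow H. if C B H then final_holes_prob m p H B Y else 0) = (if C B H then 1 else 0)"
    if "(B, H) \<in> golf_configs m Nb Nh" for B H
    using that sum_final_holes_prob[OF assms(1-3), of H H B] assms(4)
    by (auto simp: golf_configs_def intro: finite_subset)
  then show ?thesis
    unfolding golfP_final_holes_prob
    by (simp add: sum.inter_filter[OF finite_golf_configs, symmetric] split_def cong: sum.cong)
qed

lemma golfCP_final_holes_prob:
  assumes "m \<ge> 1" "0 \<le> p" "p \<le> 1" "Nb < Nh" "\<And>B H. C B H \<Longrightarrow> X \<subseteq> H"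
  shows "golfCP m Nb Nh p (\<lambda>B H Y. Y = X) (\<lambda>B H Y. C B H) =
    (\<Sum>c\<in>{c \<in> golf_configs m Nb Nh. C (fst c) (snd c)}. final_holes_prob m p (snd c) (fst c) X)
    / real (card {c \<in> golf_configs m Nb Nh. C (fst c) (snd c)})"
proof -
  have "golfCP m Nb Nh p (\<lambda>B H Y. Y = X) (\<lambda>B H Y. C B H) =
      golfP m Nb Nh p (\<lambda>B H Y. Y = X \<and> C B H) / golfP m Nb Nh p (\<lambda>B H Y. C B H)"
    by (simp add: golfCP_def)
  then show ?thesis
    using golfP_config_event[OF assms(1-4), of C] golfP_final_holes_conj[where C=C and X=X and m=m and Nb=Nb and Nh=Nh and p=p, OF assms(5)]
      finite_golf_configs[of m Nb Nh]
    by (cases "golf_configs m Nb Nh = {}") simp_all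
qed

section \<open>Rotation invariance and the single-gap case\<close>

definition shift :: "nat \<Rightarrow> nat \<Rightarrow> nat \<Rightarrow> nat" where
  "shift m x y = (y + x) mod m"

lemma shift_lt: "m \<ge> 1 \<Longrightarrow> shift m x y < m"
  by (simp add: shift_def)

lemma inj_on_shift: "inj_on (shift m x) {..<m}"
proof (rule inj_onI)
  fix a b assume a: "a \<in> {..<m}" and b: "b \<in> {..<m}" and "shift m x a = shift m x b"
  then have "int ((a + x) mod m) = int ((b + x) mod m)"
    by (simp add: shift_def)
  then have "(int a + int x) mod int m = (int b + int x) mod int m"
    by (simp add: zmod_int)
  then have "int a mod int m = int b mod int m"
    by (metis add_diff_cancel_right' mod_diff_left_eq)
  then show "a = b"
    using a b by simp
qed

lemma golf_step_shift:
  assumes "m \<ge> 1"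
  shows "golf_step m (shift m x y) d = shift m x (golf_step m y d)"
proof (cases d)
  case True
  have "((y + x) mod m + 1) mod m = (y + x + 1) mod m" "((y + 1) mod m + x) mod m = (y + 1 + x) mod m"
    by (rule mod_add_left_eq)+
  then show ?thesis
    using True by (simp add: golf_step_def shift_def add_ac)
next
  case False
  have "((y + x) mod m + (m - 1)) mod m = (y + x + (m - 1)) mod m"
    "((y + (m - 1)) mod m + x) mod m = (y + (m - 1) + x) mod m"
    by (rule mod_add_left_eq)+
  moreover have "(y + x) mod m + m - 1 = (y + x) mod m + (m - 1)" "y + m - 1 = y + (m - 1)"
    using assms by auto
  ultimately show ?thesis
    using False by (simp add: golf_step_def shift_def add_ac)
qed

lemma walk_pos_shift: "m \<ge> 1 \<Longrightarrow> walk_pos m (shift m x y) w = shift m x (walk_pos m y w)"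
  by (induction w arbitrary: y) (auto simp: golf_step_shift)

lemma walk_pos_lt: "m \<ge> 1 \<Longrightarrow> w \<noteq> [] \<Longrightarrow> walk_pos m y w < m"
proof (induction w arbitrary: y)
  case (Cons d w)
  then show ?case by (cases w) (auto simp: golf_step_def)
qed simp

lemma hit_prob_shift:
  assumes m: "m \<ge> 1" and U: "U \<subseteq> {..<m}" and h: "h < m"
  shows "hit_prob m p (shift m x ` U) (shift m x s) (shift m x h) = hit_prob m p U s h"
proof (rule hit_prob_cong)
  have mem: "shift m x y \<in> shift m x ` U \<longleftrightarrow> y \<in> U" if "y < m" for y
    using inj_on_image_mem_iff[OF inj_on_shift _ U] that by simp
  have eq: "shift m x y = shift m x h \<longleftrightarrow> y = h" if "y < m" for y
    using inj_onD[OF inj_on_shift] h that by auto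
  fix k and w :: "bool list"
  assume "length w = Suc k"
  then have "w \<noteq> []" by auto
  then have "walk_pos m s w < m" "\<And>j. 1 \<le> j \<Longrightarrow> walk_pos m s (take j w) < m"
    using walk_pos_lt[OF m, of w s] walk_pos_lt[OF m, of "take _ w" s] by auto
  then show "hits_first m (shift m x ` U) (shift m x s) (shift m x h) k w \<longleftrightarrow> hits_first m U s h k w"
    unfolding hits_first_def avoids_def walk_pos_shift[OF m] using mem eq h by auto
qed

lemma final_holes_prob_shift:
  assumes m: "m \<ge> 1"
  shows "finite B \<Longrightarrow> B \<subseteq> {..<m} \<Longrightarrow> U \<subseteq> {..<m} \<Longrightarrow> Y \<subseteq> {..<m} \<Longrightarrow>
    final_holes_prob m p (shift m x ` U) (shift m x ` B) (shift m x ` Y) = final_holes_prob m p U B Y"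
proof (induction "card B" arbitrary: B U rule: less_induct)
  case less
  let ?r = "shift m x"
  show ?case
  proof (cases "B = {}")
    case True
    have "?r ` Y = ?r ` U \<longleftrightarrow> Y = U"
      using less.prems by (intro inj_on_image_eq_iff[OF inj_on_shift]) auto
    then show ?thesis
      using True by (simp add: final_holes_prob_empty)
  next
    case False
    have inj: "inj_on ?r B" "inj_on ?r U"
      using less.prems inj_on_subset[OF inj_on_shift] by auto
    have image_Diff: "?r ` A - {?r a} = ?r ` (A - {a})" if "inj_on ?r A" "a \<in> A" for A a
      using inj_on_image_set_diff[OF that(1), of A "{a}"] that(2) by auto
    have IH: "final_holes_prob m p (?r ` (U - {h})) (?r ` (B - {b})) (?r ` Y) =
        final_holes_prob m p (U - {h}) (B - {b}) Y" if "b \<in> B" for b h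
      using card_Diff1_less[OF less.prems(1) that] less.prems by (intro less.hyps) auto
    have hit: "hit_prob m p (?r ` U) (?r b) (?r h) = hit_prob m p U b h" if "h \<in> U" for b h
      using that less.prems by (intro hit_prob_shift m) auto
    have "real (card B) * final_holes_prob m p (?r ` U) (?r ` B) (?r ` Y) =
        real (card B) * final_holes_prob m p U B Y"
      using final_holes_prob_first_ball[of "?r ` B" m p "?r ` U" "?r ` Y"]
        final_holes_prob_first_ball[of B m p U Y] less.prems(1)
      by (simp add: sum.reindex inj card_image image_Diff IH hit)
    then show ?thesis
      using False less.prems(1) by simp
  qed
qed

definition shift_config :: "nat \<Rightarrow> nat \<Rightarrow> nat set \<times> nat set \<Rightarrow> nat set \<times> nat set" where
  "shift_config m x c = (shift m x ` fst c, shift m x ` snd c)"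

lemma shift_config_in_golf_configs:
  assumes m: "m \<ge> 1" and c: "c \<in> golf_configs m Nb Nh"
  shows "shift_config m x c \<in> golf_configs m Nb Nh"
proof -
  obtain B H where BH: "c = (B, H)" "B \<subseteq> {..<m}" "H \<subseteq> {..<m}" "B \<inter> H = {}" "card B = Nb" "card H = Nh"
    using c by (auto simp: golf_configs_def)
  have "shift m x ` B \<inter> shift m x ` H = shift m x ` (B \<inter> H)"
    using inj_on_image_Int[OF inj_on_shift BH(2,3)] by simp
  moreover have "inj_on (shift m x) B" "inj_on (shift m x) H"
    using BH(2,3) inj_on_subset[OF inj_on_shift] by auto
  ultimately show ?thesis
    using BH m by (auto simp: golf_configs_def shift_config_def shift_lt card_image)
qed

lemma bij_betw_shift_config:
  assumes m: "m \<ge> 1"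
  shows "bij_betw (shift_config m x) (golf_configs m Nb Nh) (golf_configs m Nb Nh)"
proof -
  have "inj_on (shift_config m x) (golf_configs m Nb Nh)"
  proof (rule inj_onI)
    fix c c' assume c: "c \<in> golf_configs m Nb Nh" and c': "c' \<in> golf_configs m Nb Nh"
      and eq: "shift_config m x c = shift_config m x c'"
    have "fst c \<subseteq> {..<m}" "snd c \<subseteq> {..<m}" "fst c' \<subseteq> {..<m}" "snd c' \<subseteq> {..<m}"
      using c c' by (auto simp: golf_configs_def)
    then show "c = c'"
      using eq inj_on_image_eq_iff[OF inj_on_shift] unfolding shift_config_def prod_eq_iff by auto
  qed
  moreover have "shift_config m x ` golf_configs m Nb Nh = golf_configs m Nb Nh"
    by (rule endo_inj_surj[OF finite_golf_configs _ calculation]) (use shift_config_in_golf_configs[OF m] in blast)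
  ultimately show ?thesis
    unfolding bij_betw_def ..
qed

lemma sum_golf_configs_shift_vertex:
  assumes "m \<ge> 1" "x < m" "\<And>c. c \<in> golf_configs m Nb Nh \<Longrightarrow> f (shift_config m x c) x = f c 0"
  shows "(\<Sum>c\<in>golf_configs m Nb Nh. f c x) = (\<Sum>c\<in>golf_configs m Nb Nh. f c 0)"
proof -
  have "(\<Sum>c\<in>golf_configs m Nb Nh. f c x) = (\<Sum>c\<in>golf_configs m Nb Nh. f (shift_config m x c) x)"
    using sum.reindex_bij_betw[OF bij_betw_shift_config[OF assms(1), of x Nb Nh], of "\<lambda>c. f c x"] by simp
  also have "\<dots> = (\<Sum>c\<in>golf_configs m Nb Nh. f c 0)"
    using assms(3) by (rule sum.cong[OF refl])
  finally show ?thesis .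
qed

lemma sum_final_holes_prob_singletons:
  assumes "m \<ge> 1" "0 \<le> p" "p \<le> 1" "(B, H) \<in> golf_configs m b (Suc b)"
  shows "(\<Sum>x<m. final_holes_prob m p H B {x}) = 1"
proof -
  have BH: "B \<subseteq> {..<m}" "H \<subseteq> {..<m}" "card B = b" "card H = Suc b"
    using assms(4) by (auto simp: golf_configs_def)
  then have "finite B" "finite H"
    by (auto intro: finite_subset)
  have "(\<Sum>x<m. final_holes_prob m p H B {x}) = (\<Sum>Y\<in>(\<lambda>x. {x}) ` {..<m}. final_holes_prob m p H B Y)"
    by (simp add: sum.reindex)
  also have "\<dots> = (\<Sum>Y\<in>Pow {..<m}. final_holes_prob m p H B Y)"
  proof (rule sum.mono_neutral_left)
    show "\<forall>Y\<in>Pow {..<m} - (\<lambda>x. {x}) ` {..<m}. final_holes_prob m p H B Y = 0"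
      using final_holes_prob_nonzero[OF \<open>finite H\<close>] BH by (force simp: card_Suc_eq)
  qed auto
  also have "\<dots> = 1"
    using sum_final_holes_prob[OF assms(1-3) _ BH(2)] BH \<open>finite B\<close> by simp
  finally show ?thesis .
qed

lemma sum_final_holes_prob_singleton_shift:
  assumes "m \<ge> 1" "x < m"
  shows "(\<Sum>c\<in>golf_configs m Nb Nh. final_holes_prob m p (snd c) (fst c) {x}) =
    (\<Sum>c\<in>golf_configs m Nb Nh. final_holes_prob m p (snd c) (fst c) {0})"
proof (rule sum_golf_configs_shift_vertex[OF assms])
  fix c assume "c \<in> golf_configs m Nb Nh"
  then have "fst c \<subseteq> {..<m}" "snd c \<subseteq> {..<m}"
    by (auto simp: golf_configs_def)
  moreover have "finite (fst c)"
    using calculation(1) by (rule finite_subset) simp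
  moreover have "shift m x ` {0} = {x}"
    using assms(2) by (simp add: shift_def)
  ultimately show "final_holes_prob m p (snd (shift_config m x c)) (fst (shift_config m x c)) {x} =
      final_holes_prob m p (snd c) (fst c) {0}"
    using final_holes_prob_shift[OF assms(1), of "fst c" "snd c" "{0}" p x] assms(1)
    by (simp add: shift_config_def)
qed

lemma sum_final_holes_prob_hole_0:
  assumes "m \<ge> 1" "0 \<le> p" "p \<le> 1"
  shows "real m * (\<Sum>c\<in>{c \<in> golf_configs m b (Suc b). 0 \<in> snd c}. final_holes_prob m p (snd c) (fst c) {0})
    = real (card (golf_configs m b (Suc b)))"
proof -
  let ?C = "golf_configs m b (Suc b)"
  define g where "g x = (\<Sum>c\<in>?C. final_holes_prob m p (snd c) (fst c) {x})" for x
  have "g 0 = (\<Sum>c\<in>{c \<in> ?C. 0 \<in> snd c}. final_holes_prob m p (snd c) (fst c) {0})"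
    unfolding g_def
  proof (rule sum.mono_neutral_right[OF finite_golf_configs])
    show "\<forall>c\<in>?C - {c \<in> ?C. 0 \<in> snd c}. final_holes_prob m p (snd c) (fst c) {0} = 0"
    proof
      fix c assume "c \<in> ?C - {c \<in> ?C. 0 \<in> snd c}"
      then have "finite (snd c)" "0 \<notin> snd c"
        using finite_subset[of "snd c" "{..<m}"] by (auto simp: golf_configs_def)
      then show "final_holes_prob m p (snd c) (fst c) {0} = 0"
        by (simp add: final_holes_prob_eq_0)
    qed
  qed auto
  moreover have "real m * g 0 = (\<Sum>x<m. g x)"
    using sum_final_holes_prob_singleton_shift[OF assms(1)] unfolding g_def
    by (metis (no_types, lifting) lessThan_iff card_lessThan sum.cong sum_constant)
  moreover have "\<dots> = (\<Sum>c\<in>?C. \<Sum>x<m. final_holes_prob m p (snd c) (fst c) {x})"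
    unfolding g_def by (rule sum.swap)
  moreover have "\<dots> = real (card ?C)"
    using sum_final_holes_prob_singletons[OF assms] by simp
  ultimately show ?thesis
    by simp
qed

lemma card_golf_configs_hole_0:
  assumes "m \<ge> 1"
  shows "real m * real (card {c \<in> golf_configs m Nb Nh. 0 \<in> snd c}) = real Nh * real (card (golf_configs m Nb Nh))"
proof -
  let ?C = "golf_configs m Nb Nh"
  define n where "n x = (\<Sum>c\<in>?C. if x \<in> snd c then 1 else 0 :: real)" for x
  have "n x = n 0" if "x < m" for x
    unfolding n_def
  proof (rule sum_golf_configs_shift_vertex[OF assms that])
    fix c assume "c \<in> ?C"
    then have "snd c \<subseteq> {..<m}"
      by (auto simp: golf_configs_def)
    then have "shift m x 0 \<in> shift m x ` snd c \<longleftrightarrow> 0 \<in> snd c"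
      by (rule inj_on_image_mem_iff[OF inj_on_shift, rotated]) (use assms in simp)
    moreover have "shift m x 0 = x"
      using that by (simp add: shift_def)
    ultimately have "x \<in> shift m x ` snd c \<longleftrightarrow> 0 \<in> snd c"
      by simp
    then show "(if x \<in> snd (shift_config m x c) then 1 else 0 :: real) = (if 0 \<in> snd c then 1 else 0)"
      by (simp add: shift_config_def)
  qed
  then have "real m * n 0 = (\<Sum>x<m. n x)"
    by (metis (no_types, lifting) lessThan_iff card_lessThan sum.cong sum_constant)
  also have "\<dots> = (\<Sum>c\<in>?C. \<Sum>x<m. if x \<in> snd c then 1 else 0 :: real)"
    unfolding n_def by (rule sum.swap)
  also have "\<dots> = (\<Sum>c\<in>?C. real Nh)"
  proof (rule sum.cong[OF refl])
    fix c assume "c \<in> ?C"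
    then have "snd c \<subseteq> {..<m}" "card (snd c) = Nh"
      by (auto simp: golf_configs_def)
    then show "(\<Sum>x<m. if x \<in> snd c then 1 else 0 :: real) = real Nh"
      by (simp add: sum.If_cases Int_absorb1)
  qed
  finally show ?thesis
    unfolding n_def by (simp add: sum.If_cases finite_golf_configs Collect_conj_eq Int_commute)
qed

theorem golfCP_single_gap:
  assumes "2 * b + 1 \<le> m" "0 \<le> p" "p \<le> 1"
  shows "golfCP m b (b + 1) p (\<lambda>B H Y. Y = {0}) (\<lambda>B H Y. 0 \<in> H) = 1 / real (b + 1)"
proof -
  let ?C = "golf_configs m b (Suc b)"
  let ?S = "{c \<in> ?C. 0 \<in> snd c}"
  have m: "m \<ge> 1"
    using assms(1) by simp
  have "({..<b}, {b..<2 * b + 1}) \<in> ?C"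
    using assms(1) by (auto simp: golf_configs_def)
  then have "card ?C > 0"
    using finite_golf_configs card_gt_0_iff by blast
  have "golfCP m b (b + 1) p (\<lambda>B H Y. Y = {0}) (\<lambda>B H Y. 0 \<in> H) =
      (\<Sum>c\<in>?S. final_holes_prob m p (snd c) (fst c) {0}) / real (card ?S)"
    using golfCP_final_holes_prob[OF m assms(2,3), of b "b + 1" "\<lambda>B H. 0 \<in> H" "{0}"] by simp
  moreover have "(\<Sum>c\<in>?S. final_holes_prob m p (snd c) (fst c) {0}) = real (card ?C) / real m"
    using sum_final_holes_prob_hole_0[OF m assms(2,3), of b] m by (simp add: field_simps)
  moreover have "real (card ?S) = real (Suc b) * real (card ?C) / real m"
    using card_golf_configs_hole_0[OF m, of b "Suc b"] m by (simp add: field_simps)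
  ultimately show ?thesis
    using \<open>card ?C > 0\<close> m by simp
qed

section \<open>Cutting the cycle into gaps\<close>

lemma vertex_inj:
  assumes "n \<ge> 1" "a0 \<le> z" "z < a0 + int n" "a0 \<le> z'" "z' < a0 + int n" "vertex n z = vertex n z'"
  shows "z = z'"
proof -
  have "int n dvd (z - z')"
    using assms(1,6) by (simp add: vertex_eq_iff mod_eq_dvd_iff)
  then obtain q where q: "z - z' = int n * q"
    by (auto simp: dvd_def)
  have "q = 0"
  proof (rule ccontr)
    assume "q \<noteq> 0"
    then have "int n * 1 \<le> int n * \<bar>q\<bar>"
      by (intro mult_left_mono) auto
    then have "int n \<le> \<bar>int n * q\<bar>"
      by (simp add: abs_mult)
    then show False
      using q assms(2-5) by linarith
  qed
  then show ?thesis
    using q by simp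
qed

lemma prod_indicator:
  "finite A \<Longrightarrow> (\<Prod>i\<in>A. if P i then 1 else 0 :: real) = (if \<forall>i\<in>A. P i then 1 else 0)"
  by (auto intro: prod_zero)

text \<open>The \<open>k\<close> cut points are the vertices \<open>a i\<close> for \<open>i < k\<close>; lifting them to increasing integers
  with \<open>a k = a 0 + n\<close> turns every gap into an integer interval.\<close>
locale cut_cycle =
  fixes n k :: nat and a :: "nat \<Rightarrow> int"
  assumes n_ge_1: "n \<ge> 1" and k_ge_1: "k \<ge> 1"
    and a_less_Suc: "\<And>i. i < k \<Longrightarrow> a i < a (Suc i)"
    and a_k: "a k = a 0 + int n"
begin

definition cuts :: "nat set" where
  "cuts = (\<lambda>i. vertex n (a i)) ` {..<k}"

definition gap_len :: "nat \<Rightarrow> nat" where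
  "gap_len i = nat (a (Suc i) - a i - 1)"

definition pt :: "nat \<Rightarrow> nat \<Rightarrow> nat" where
  "pt i t = vertex n (a i + int t)"

definition gap :: "nat \<Rightarrow> nat set" where
  "gap i = pt i ` {1..gap_len i}"

lemma a_less: "i < j \<Longrightarrow> j \<le> k \<Longrightarrow> a i < a j"
proof (induction j)
  case (Suc j)
  then show ?case
    using a_less_Suc[of j] by (cases "i = j") auto
qed simp

lemma a_le: "i \<le> j \<Longrightarrow> j \<le> k \<Longrightarrow> a i \<le> a j"
  using a_less by (cases "i = j") (auto simp: order.strict_implies_order)

lemma gap_len_eq: "i < k \<Longrightarrow> int (gap_len i) = a (Suc i) - a i - 1"
  unfolding gap_len_def using a_less_Suc[of i] by simp

lemma exists_gap:
  assumes "a 0 \<le> z" "z < a k"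
  shows "\<exists>i<k. a i \<le> z \<and> z < a (Suc i)"
proof -
  define i where "i = Max {i. i < k \<and> a i \<le> z}"
  have "0 \<in> {i. i < k \<and> a i \<le> z}"
    using assms k_ge_1 by simp
  then have "i \<in> {i. i < k \<and> a i \<le> z}"
    unfolding i_def by (intro Max_in) auto
  then have i: "i < k" "a i \<le> z"
    by auto
  have "z < a (Suc i)"
  proof (cases "Suc i < k")
    case True
    show ?thesis
    proof (rule ccontr)
      assume "\<not> z < a (Suc i)"
      then have "Suc i \<in> {i. i < k \<and> a i \<le> z}"
        using True by simp
      then show False
        using Max_ge[of "{i. i < k \<and> a i \<le> z}" "Suc i"] unfolding i_def by fastforce
    qed
  next
    case False
    then have "Suc i = k"
      using i(1) by simp
    then show ?thesis
      using assms(2) by simp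
  qed
  then show ?thesis
    using i by blast
qed

lemma gap_unique:
  assumes "i < k" "j < k" "a i \<le> z" "z < a (Suc i)" "a j \<le> z" "z < a (Suc j)"
  shows "i = j"
  using a_le[of "Suc i" j] a_le[of "Suc j" i] assms by (cases i j rule: linorder_cases) auto

lemma lift_bounds:
  assumes "i < k" "t \<le> gap_len i"
  shows "a i + int t < a (Suc i)" "a 0 \<le> a i + int t" "a i + int t < a 0 + int n"
proof -
  show "a i + int t < a (Suc i)"
    using assms gap_len_eq[OF assms(1)] by simp
  then show "a i + int t < a 0 + int n"
    using a_le[of "Suc i" k] assms a_k by simp
  show "a 0 \<le> a i + int t"
    using a_le[of 0 i] assms by simp
qed

lemma pt_inj:
  assumes "i < k" "j < k" "t \<le> gap_len i" "t' \<le> gap_len j" "pt i t = pt j t'"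
  shows "i = j \<and> t = t'"
proof -
  have "a i + int t = a j + int t'"
    using vertex_inj[OF n_ge_1 lift_bounds(2,3)[OF assms(1,3)] lift_bounds(2,3)[OF assms(2,4)]] assms(5)
    unfolding pt_def by blast
  moreover have "i = j"
    using gap_unique[OF assms(1,2), of "a i + int t"] lift_bounds(1)[OF assms(1,3)]
      lift_bounds(1)[OF assms(2,4)] calculation
    by simp
  ultimately show ?thesis
    by simp
qed

lemma inj_on_pt: "i < k \<Longrightarrow> inj_on (pt i) {1..gap_len i}"
  by (rule inj_onI) (use pt_inj in auto)

lemma pt_lt: "pt i t < n"
  unfolding pt_def using vertex_lt[OF n_ge_1] .

lemma cuts_eq: "cuts = (\<lambda>i. pt i 0) ` {..<k}"
  unfolding cuts_def pt_def by simp

lemma pt_0_in_cuts: "i < k \<Longrightarrow> pt i 0 \<in> cuts"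
  unfolding cuts_eq by auto

lemma pt_notin_cuts:
  assumes "i < k" "1 \<le> t" "t \<le> gap_len i"
  shows "pt i t \<notin> cuts"
proof
  assume "pt i t \<in> cuts"
  then obtain j where "j < k" "pt i t = pt j 0"
    unfolding cuts_eq by auto
  then show False
    using pt_inj[OF assms(1) \<open>j < k\<close> assms(3), of 0] assms(2) by simp
qed

lemma pt_gap_end_in_cuts:
  assumes "i < k"
  shows "pt i (gap_len i + 1) \<in> cuts"
proof -
  have end_eq: "a i + int (gap_len i + 1) = a (Suc i)"
    using gap_len_eq[OF assms] by simp
  show ?thesis
  proof (cases "Suc i < k")
    case True
    then show ?thesis
      unfolding cuts_def pt_def end_eq by auto
  next
    case False
    then have "Suc i = k"
      using assms by simp
    then have "vertex n (a (Suc i)) = vertex n (a 0)"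
      using a_k by (simp add: vertex_add_self)
    then show ?thesis
      unfolding cuts_def pt_def end_eq using k_ge_1 by auto
  qed
qed

lemma vertex_eq_pt:
  assumes "v < n"
  shows "\<exists>i<k. \<exists>t\<le>gap_len i. v = pt i t"
proof -
  define z where "z = a 0 + (int v - a 0) mod int n"
  have z: "a 0 \<le> z" "z < a k"
    using n_ge_1 a_k unfolding z_def by auto
  have "z mod int n = int v mod int n"
    unfolding z_def by (metis add.commute diff_add_cancel mod_add_right_eq)
  then have "vertex n z = v"
    using assms unfolding vertex_def by simp
  obtain i where i: "i < k" "a i \<le> z" "z < a (Suc i)"
    using exists_gap[OF z] by blast
  define t where "t = nat (z - a i)"
  have "int t = z - a i"
    using i t_def by simp
  then have "t \<le> gap_len i" "pt i t = v"
    using gap_len_eq[OF i(1)] i \<open>vertex n z = v\<close> unfolding pt_def by auto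
  then show ?thesis
    using i by blast
qed

lemma golf_step_pt:
  assumes "i < k" "1 \<le> t"
  shows "golf_step n (pt i t) d = pt i (if d then t + 1 else t - 1)"
  using assms by (simp add: pt_def golf_step_vertex[OF n_ge_1] of_nat_diff algebra_simps)

section \<open>Walks inside a gap\<close>

definition local_part :: "nat set \<Rightarrow> nat \<Rightarrow> nat set" where
  "local_part S i = {t \<in> {1..gap_len i}. pt i t \<in> S}"

lemma local_part_subset: "local_part S i \<subseteq> {1..gap_len i}"
  unfolding local_part_def by auto

lemma finite_local_part: "finite (local_part S i)"
  unfolding local_part_def by auto

text \<open>On the cycle with \<open>gap_len i + 1\<close> vertices, a vertex \<open>t \<in> {1..gap_len i}\<close> stands for \<open>pt i t\<close>,
  while \<open>0\<close> stands for both ends of the gap, which are holes.\<close>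
abbreviation local_holes :: "nat set \<Rightarrow> nat \<Rightarrow> nat set" where
  "local_holes U i \<equiv> insert 0 (local_part U i)"

lemma golf_step_local:
  fixes d :: bool
  assumes i: "i < k" and U: "cuts \<subseteq> U" and t: "1 \<le> t" "t \<le> gap_len i"
  defines "t' \<equiv> golf_step (gap_len i + 1) t d"
  shows "golf_step n (pt i t) d \<in> U \<longleftrightarrow> t' \<in> local_holes U i"
    and "t' \<noteq> 0 \<Longrightarrow> t' \<in> {1..gap_len i} \<and> golf_step n (pt i t) d = pt i t'"
    and "t' = 0 \<Longrightarrow> golf_step n (pt i t) d \<in> cuts"
proof -
  define s where "s = (if d then t + 1 else t - 1)"
  have big: "golf_step n (pt i t) d = pt i s"
    unfolding s_def using golf_step_pt[OF i t(1)] .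
  have small: "t' = (if s = gap_len i + 1 then 0 else s)"
    unfolding t'_def s_def using golf_step_interior[OF t] t by auto
  have s_cases: "s = 0 \<or> s = gap_len i + 1 \<or> s \<in> {1..gap_len i}"
    unfolding s_def using t by auto
  have ends: "s = 0 \<or> s = gap_len i + 1 \<Longrightarrow> pt i s \<in> cuts"
    using pt_0_in_cuts[OF i] pt_gap_end_in_cuts[OF i] by auto
  show "golf_step n (pt i t) d \<in> U \<longleftrightarrow> t' \<in> local_holes U i"
    using s_cases ends U unfolding big small local_part_def by auto
  show "t' \<noteq> 0 \<Longrightarrow> t' \<in> {1..gap_len i} \<and> golf_step n (pt i t) d = pt i t'"
    using s_cases unfolding big small by auto
  show "t' = 0 \<Longrightarrow> golf_step n (pt i t) d \<in> cuts"
    using s_cases ends unfolding big small by auto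
qed

lemma walk_pos_local:
  assumes i: "i < k" and U: "cuts \<subseteq> U" and t0: "t0 \<in> {1..gap_len i}"
  shows "avoids (gap_len i + 1) (local_holes U i) t0 (length w) w \<Longrightarrow>
    walk_pos (gap_len i + 1) t0 w \<in> {1..gap_len i} \<and>
    walk_pos n (pt i t0) w = pt i (walk_pos (gap_len i + 1) t0 w)"
proof (induction w rule: rev_induct)
  case (snoc d w)
  then have "avoids (gap_len i + 1) (local_holes U i) t0 (length w) w"
    "walk_pos (gap_len i + 1) t0 (w @ [d]) \<notin> local_holes U i"
    using avoids_snoc by auto
  with snoc.IH show ?case
    using golf_step_local(2)[OF i U, of "walk_pos (gap_len i + 1) t0 w" d] by (auto simp: walk_pos_snoc)
qed (use t0 in simp)

lemma avoids_local_iff: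
  assumes i: "i < k" and U: "cuts \<subseteq> U" and t0: "t0 \<in> {1..gap_len i}"
  shows "avoids n U (pt i t0) (length w) w \<longleftrightarrow> avoids (gap_len i + 1) (local_holes U i) t0 (length w) w"
proof (induction w rule: rev_induct)
  case (snoc d w)
  show ?case
  proof (cases "avoids (gap_len i + 1) (local_holes U i) t0 (length w) w")
    case True
    with walk_pos_local[OF assms] show ?thesis
      unfolding avoids_snoc snoc.IH
      using golf_step_local(1)[OF i U, of "walk_pos (gap_len i + 1) t0 w" d] by (auto simp: walk_pos_snoc)
  qed (unfold avoids_snoc snoc.IH, simp)
qed (simp add: avoids_def)

lemma walk_pos_local_last:
  fixes d :: bool
  assumes i: "i < k" and U: "cuts \<subseteq> U" and t0: "t0 \<in> {1..gap_len i}"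
    and avoids: "avoids n U (pt i t0) (length v) v"
  defines "t \<equiv> walk_pos (gap_len i + 1) t0 (v @ [d])"
  shows "t = 0 \<and> walk_pos n (pt i t0) (v @ [d]) \<in> cuts \<or>
    t \<in> {1..gap_len i} \<and> walk_pos n (pt i t0) (v @ [d]) = pt i t"
proof -
  have "walk_pos (gap_len i + 1) t0 v \<in> {1..gap_len i}"
    "walk_pos n (pt i t0) v = pt i (walk_pos (gap_len i + 1) t0 v)"
    using walk_pos_local[OF assms(1-3)] avoids avoids_local_iff[OF assms(1-3)] by auto
  then show ?thesis
    using golf_step_local(2,3)[OF i U, of "walk_pos (gap_len i + 1) t0 v" d]
    unfolding t_def by (auto simp: walk_pos_snoc)
qed

lemma hit_prob_local:
  assumes i: "i < k" and U: "cuts \<subseteq> U" and t0: "t0 \<in> {1..gap_len i}" and th: "th \<in> {1..gap_len i}"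
  shows "hit_prob n p U (pt i t0) (pt i th) = hit_prob (gap_len i + 1) p (local_holes U i) t0 th"
proof (rule hit_prob_cong)
  fix j and w :: "bool list"
  assume "length w = Suc j"
  then obtain v d where w: "w = v @ [d]" and v: "length v = j"
    by (cases w rule: rev_cases) auto
  have th_U: "pt i th \<in> U \<longleftrightarrow> th \<in> local_holes U i"
    using th by (auto simp: local_part_def)
  have "walk_pos n (pt i t0) (v @ [d]) = pt i th \<longleftrightarrow> walk_pos (gap_len i + 1) t0 (v @ [d]) = th"
    if "avoids n U (pt i t0) (length v) v"
    using walk_pos_local_last[OF assms(1-3) that, of d] pt_notin_cuts[OF i] pt_inj[OF i i, of _ th] th
    by fastforce
  then show "hits_first n U (pt i t0) (pt i th) j w \<longleftrightarrow> hits_first (gap_len i + 1) (local_holes U i) t0 th j w"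
    unfolding w v[symmetric] hits_first_snoc[OF refl] th_U
    using avoids_local_iff[OF assms(1-3), of v] by metis
qed

lemma hit_prob_outside_gap:
  assumes i: "i < k" and U: "cuts \<subseteq> U" and t0: "t0 \<in> {1..gap_len i}"
    and h: "h \<notin> cuts" "h \<notin> gap i"
  shows "hit_prob n p U (pt i t0) h = 0"
proof (rule hit_prob_eq_0)
  fix j and w :: "bool list"
  assume "length w = Suc j"
  then obtain v d where w: "w = v @ [d]" and v: "length v = j"
    by (cases w rule: rev_cases) auto
  show "\<not> hits_first n U (pt i t0) h j w"
  proof
    assume "hits_first n U (pt i t0) h j w"
    then have "walk_pos n (pt i t0) (v @ [d]) = h" "avoids n U (pt i t0) (length v) v"
      unfolding w hits_first_snoc[OF v] using v by auto
    then show False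
      using walk_pos_local_last[OF assms(1-3), of v d] h unfolding gap_def by blast
  qed
qed

section \<open>Factorization over the gaps\<close>

lemma local_part_Diff_pt:
  assumes "i < k" "j < k" "t \<in> {1..gap_len j}"
  shows "local_part (S - {pt j t}) i = (if i = j then local_part S j - {t} else local_part S i)"
  using pt_inj[OF assms(1,2) _ ] assms unfolding local_part_def by auto

lemma UN_pt_local_part: "S \<subseteq> (\<Union>i<k. gap i) \<Longrightarrow> (\<Union>i<k. pt i ` local_part S i) = S"
  unfolding gap_def local_part_def by blast

lemma sum_local_parts:
  assumes "S \<subseteq> (\<Union>i<k. gap i)"
  shows "(\<Sum>x\<in>S. f x) = (\<Sum>i<k. \<Sum>t\<in>local_part S i. f (pt i t))"
proof -
  have "S = (\<Union>i<k. pt i ` local_part S i)"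
    using UN_pt_local_part[OF assms] by simp
  then have "(\<Sum>x\<in>S. f x) = (\<Sum>x\<in>(\<Union>i<k. pt i ` local_part S i). f x)"
    by (rule arg_cong)
  also have "\<dots> = (\<Sum>i<k. \<Sum>x\<in>pt i ` local_part S i. f x)"
  proof (rule sum.UNION_disjoint)
    show "\<forall>i\<in>{..<k}. \<forall>j\<in>{..<k}. i \<noteq> j \<longrightarrow> pt i ` local_part S i \<inter> pt j ` local_part S j = {}"
    proof (intro ballI impI)
      fix i j assume ij: "i \<in> {..<k}" "j \<in> {..<k}" "i \<noteq> j"
      have "pt i t \<noteq> pt j t'" if "t \<in> local_part S i" "t' \<in> local_part S j" for t t'
        using pt_inj[of i j t t'] ij that by (auto simp: local_part_def)
      then show "pt i ` local_part S i \<inter> pt j ` local_part S j = {}"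
        by blast
    qed
  qed (simp_all add: finite_local_part)
  also have "\<dots> = (\<Sum>i<k. \<Sum>t\<in>local_part S i. f (pt i t))"
    using inj_on_subset[OF inj_on_pt local_part_subset] by (simp add: sum.reindex)
  finally show ?thesis .
qed

lemma card_local_parts: "S \<subseteq> (\<Union>i<k. gap i) \<Longrightarrow> card S = (\<Sum>i<k. card (local_part S i))"
  using sum_local_parts[of S "\<lambda>_. 1 :: nat"] by simp

lemma eq_cuts_iff:
  assumes "cuts \<subseteq> U" "U \<subseteq> {..<n}"
  shows "U = cuts \<longleftrightarrow> (\<forall>i<k. local_part U i = {})"
proof
  assume "U = cuts"
  then show "\<forall>i<k. local_part U i = {}"
    unfolding local_part_def using pt_notin_cuts by auto
next
  assume empty: "\<forall>i<k. local_part U i = {}"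
  have "v \<in> cuts" if "v \<in> U" for v
  proof -
    have "v < n"
      using that assms(2) by auto
    then obtain i t where "i < k" "t \<le> gap_len i" "v = pt i t"
      using vertex_eq_pt by blast
    then show ?thesis
      using empty that pt_0_in_cuts unfolding local_part_def by (cases "t = 0") auto
  qed
  then show "U = cuts"
    using assms(1) by blast
qed

lemma sum_hit_prob_gap:
  assumes j: "j < k" and tb: "tb \<in> {1..gap_len j}" and U: "cuts \<subseteq> U" "U \<subseteq> {..<n}"
  shows "(\<Sum>h\<in>U - cuts. hit_prob n p U (pt j tb) h * f h) =
    (\<Sum>t\<in>local_part U j. hit_prob (gap_len j + 1) p (local_holes U j) tb t * f (pt j t))"
proof -
  have "(\<Sum>h\<in>U - cuts. hit_prob n p U (pt j tb) h * f h) =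
      (\<Sum>h\<in>pt j ` local_part U j. hit_prob n p U (pt j tb) h * f h)"
  proof (rule sum.mono_neutral_right)
    show "finite (U - cuts)"
      using U(2) finite_subset by blast
    show "pt j ` local_part U j \<subseteq> U - cuts"
      using pt_notin_cuts[OF j] unfolding local_part_def by auto
    show "\<forall>h\<in>U - cuts - pt j ` local_part U j. hit_prob n p U (pt j tb) h * f h = 0"
    proof
      fix h assume h: "h \<in> U - cuts - pt j ` local_part U j"
      then have "h \<notin> gap j"
        unfolding gap_def local_part_def by auto
      then show "hit_prob n p U (pt j tb) h * f h = 0"
        using hit_prob_outside_gap[OF j U(1) tb] h by simp
    qed
  qed
  also have "\<dots> = (\<Sum>t\<in>local_part U j. hit_prob n p U (pt j tb) (pt j t) * f (pt j t))"
    using inj_on_subset[OF inj_on_pt[OF j] local_part_subset] by (simp add: sum.reindex)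
  also have "\<dots> = (\<Sum>t\<in>local_part U j. hit_prob (gap_len j + 1) p (local_holes U j) tb t * f (pt j t))"
  proof (rule sum.cong[OF refl])
    fix t assume "t \<in> local_part U j"
    then have "t \<in> {1..gap_len j}"
      unfolding local_part_def by simp
    then show "hit_prob n p U (pt j tb) (pt j t) * f (pt j t) =
        hit_prob (gap_len j + 1) p (local_holes U j) tb t * f (pt j t)"
      using hit_prob_local[OF j U(1) tb] by simp
  qed
  finally show ?thesis .
qed

definition local_final_prob :: "real \<Rightarrow> nat set \<Rightarrow> nat set \<Rightarrow> nat \<Rightarrow> real" where
  "local_final_prob p U B i = final_holes_prob (gap_len i + 1) p (local_holes U i) (local_part B i) {0}"

lemma local_final_prob_Diff_pt:
  assumes "i < k" "j < k" "t \<in> local_part U j" "tb \<in> local_part B j"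
  shows "local_final_prob p (U - {pt j t}) (B - {pt j tb}) i =
    (if i = j then final_holes_prob (gap_len j + 1) p (local_holes U j - {t}) (local_part B j - {tb}) {0}
     else local_final_prob p U B i)"
proof -
  have "t \<in> {1..gap_len j}" "tb \<in> {1..gap_len j}"
    using assms(3,4) local_part_subset by blast+
  then show ?thesis
    unfolding local_final_prob_def using assms(1,2) by (simp add: local_part_Diff_pt insert_Diff_if)
qed

lemma final_holes_prob_no_balls:
  assumes "cuts \<subseteq> U" "U \<subseteq> {..<n}"
  shows "final_holes_prob n p U {} cuts = (\<Prod>i<k. local_final_prob p U {} i)"
proof -
  have "local_part {} i = {}" "{0} = local_holes U i \<longleftrightarrow> local_part U i = {}" for i
    by (auto simp: local_part_def)
  then have "local_final_prob p U {} i = (if local_part U i = {} then 1 else 0)" for i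
    by (simp add: local_final_prob_def final_holes_prob_empty)
  then have "(\<Prod>i<k. local_final_prob p U {} i) = (if \<forall>i<k. local_part U i = {} then 1 else 0)"
    by (simp add: prod_indicator)
  moreover have "cuts = U \<longleftrightarrow> (\<forall>i<k. local_part U i = {})"
    using eq_cuts_iff[OF assms] by auto
  ultimately show ?thesis
    by (simp add: final_holes_prob_empty)
qed

lemma local_final_prob_first_ball:
  "real (card (local_part B j)) * local_final_prob p U B j =
    (\<Sum>tb\<in>local_part B j. \<Sum>t\<in>local_part U j. hit_prob (gap_len j + 1) p (local_holes U j) tb t *
       final_holes_prob (gap_len j + 1) p (local_holes U j - {t}) (local_part B j - {tb}) {0})"
  unfolding local_final_prob_def
  using final_holes_prob_first_ball_Diff[OF finite_local_part, of "local_holes U j"]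
  by (simp add: local_part_def)

lemma first_ball_in_gap:
  assumes j: "j < k" and tb: "tb \<in> local_part B j" and U: "cuts \<subseteq> U" "U \<subseteq> {..<n}"
    and smaller: "\<And>t. t \<in> local_part U j \<Longrightarrow>
      final_holes_prob n p (U - {pt j t}) (B - {pt j tb}) cuts =
        (\<Prod>i<k. local_final_prob p (U - {pt j t}) (B - {pt j tb}) i)"
  shows "(\<Sum>h\<in>U - cuts. hit_prob n p U (pt j tb) h * final_holes_prob n p (U - {h}) (B - {pt j tb}) cuts) =
    (\<Sum>t\<in>local_part U j. hit_prob (gap_len j + 1) p (local_holes U j) tb t *
       final_holes_prob (gap_len j + 1) p (local_holes U j - {t}) (local_part B j - {tb}) {0})
    * (\<Prod>i\<in>{..<k} - {j}. local_final_prob p U B i)"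
proof -
  have "final_holes_prob n p (U - {pt j t}) (B - {pt j tb}) cuts =
      final_holes_prob (gap_len j + 1) p (local_holes U j - {t}) (local_part B j - {tb}) {0}
      * (\<Prod>i\<in>{..<k} - {j}. local_final_prob p U B i)" if t: "t \<in> local_part U j" for t
    using smaller[OF t] j by (simp add: local_final_prob_Diff_pt[OF _ j t tb] prod.remove)
  moreover have "tb \<in> {1..gap_len j}"
    using tb local_part_subset by blast
  ultimately show ?thesis
    by (simp add: sum_hit_prob_gap[OF j _ U] sum_distrib_right mult.assoc)
qed

lemma final_holes_prob_factorizes:
  "finite B \<Longrightarrow> cuts \<subseteq> U \<Longrightarrow> U \<subseteq> {..<n} \<Longrightarrow> B \<subseteq> (\<Union>i<k. gap i) \<Longrightarrow>
    final_holes_prob n p U B cuts = (\<Prod>i<k. local_final_prob p U B i)"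
proof (induction "card B" arbitrary: B U rule: less_induct)
  case less
  note B = less.prems(1,4) and U = less.prems(2,3)
  show ?case
  proof (cases "B = {}")
    case True
    then show ?thesis
      using final_holes_prob_no_balls[OF U] by simp
  next
    case False
    define Q where "Q j = (\<Prod>i\<in>{..<k} - {j}. local_final_prob p U B i)" for j
    have P_eq: "(\<Prod>i<k. local_final_prob p U B i) = local_final_prob p U B j * Q j" if "j < k" for j
      unfolding Q_def using that by (subst prod.remove[of _ j]) auto
    have first_ball: "(\<Sum>h\<in>U - cuts. hit_prob n p U (pt j tb) h *
          final_holes_prob n p (U - {h}) (B - {pt j tb}) cuts)
        = (\<Sum>t\<in>local_part U j. hit_prob (gap_len j + 1) p (local_holes U j) tb t *
          final_holes_prob (gap_len j + 1) p (local_holes U j - {t}) (local_part B j - {tb}) {0}) * Q j"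
      if j: "j < k" and tb: "tb \<in> local_part B j" for j tb
      unfolding Q_def
    proof (rule first_ball_in_gap[OF j tb U])
      fix t assume "t \<in> local_part U j"
      then have "pt j tb \<in> B" "pt j t \<notin> cuts"
        using tb pt_notin_cuts[OF j] by (auto simp: local_part_def)
      then show "final_holes_prob n p (U - {pt j t}) (B - {pt j tb}) cuts =
          (\<Prod>i<k. local_final_prob p (U - {pt j t}) (B - {pt j tb}) i)"
        using B U card_Diff1_less[OF B(1)] by (intro less.hyps) auto
    qed
    have "real (card B) * final_holes_prob n p U B cuts =
        (\<Sum>b\<in>B. \<Sum>h\<in>U - cuts. hit_prob n p U b h * final_holes_prob n p (U - {h}) (B - {b}) cuts)"
      using U(2) finite_subset by (intro final_holes_prob_first_ball_Diff[OF B(1)]) auto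
    also have "\<dots> = (\<Sum>j<k. \<Sum>tb\<in>local_part B j. \<Sum>h\<in>U - cuts.
        hit_prob n p U (pt j tb) h * final_holes_prob n p (U - {h}) (B - {pt j tb}) cuts)"
      by (rule sum_local_parts[OF B(2)])
    also have "\<dots> = (\<Sum>j<k. real (card (local_part B j)) * local_final_prob p U B j * Q j)"
      by (simp add: first_ball local_final_prob_first_ball sum_distrib_right)
    also have "\<dots> = real (card B) * (\<Prod>i<k. local_final_prob p U B i)"
      by (simp add: P_eq card_local_parts[OF B(2)] sum_distrib_right mult.assoc)
    finally show ?thesis
      using False B(1) by simp
  qed
qed

section \<open>Configurations conditioned on the gaps\<close>

definition gap_counts :: "(nat \<Rightarrow> nat) \<Rightarrow> nat set \<Rightarrow> nat set \<Rightarrow> bool" where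
  "gap_counts b B H \<longleftrightarrow> cuts \<subseteq> H \<and> (\<forall>i<k. card (B \<inter> gap i) = b i \<and> card (H \<inter> gap i) = b i)"

definition cut_configs :: "nat \<Rightarrow> nat \<Rightarrow> (nat \<Rightarrow> nat) \<Rightarrow> (nat set \<times> nat set) set" where
  "cut_configs Nb Nh b = {c \<in> golf_configs n Nb Nh. gap_counts b (fst c) (snd c)}"

definition local_configs :: "(nat \<Rightarrow> nat) \<Rightarrow> nat \<Rightarrow> (nat set \<times> nat set) set" where
  "local_configs b i = {c \<in> golf_configs (gap_len i + 1) (b i) (b i + 1). 0 \<in> snd c}"

definition localize :: "nat set \<times> nat set \<Rightarrow> nat \<Rightarrow> nat set \<times> nat set" where
  "localize c = (\<lambda>i\<in>{..<k}. (local_part (fst c) i, local_holes (snd c) i))"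

definition globalize :: "(nat \<Rightarrow> nat set \<times> nat set) \<Rightarrow> nat set \<times> nat set" where
  "globalize f = ((\<Union>i<k. pt i ` fst (f i)), cuts \<union> (\<Union>i<k. pt i ` (snd (f i) - {0})))"

lemma card_Int_gap: "i < k \<Longrightarrow> card (S \<inter> gap i) = card (local_part S i)"
proof -
  assume i: "i < k"
  have "S \<inter> gap i = pt i ` local_part S i"
    unfolding gap_def local_part_def by auto
  then show ?thesis
    using card_image[OF inj_on_subset[OF inj_on_pt[OF i] local_part_subset]] by simp
qed

lemma card_cuts: "card cuts = k"
proof -
  have "inj_on (\<lambda>i. pt i 0) {..<k}"
    by (rule inj_onI) (use pt_inj in auto)
  then show ?thesis
    unfolding cuts_eq by (simp add: card_image)
qed

lemma cuts_subset: "cuts \<subseteq> {..<n}"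
  unfolding cuts_eq using pt_lt by auto

lemma gaps_subset: "(\<Union>i<k. gap i) \<subseteq> {..<n}"
  unfolding gap_def using pt_lt by auto

lemma subset_gaps:
  assumes "S \<subseteq> {..<n}" "S \<inter> cuts = {}"
  shows "S \<subseteq> (\<Union>i<k. gap i)"
proof
  fix v assume v: "v \<in> S"
  then obtain i t where it: "i < k" "t \<le> gap_len i" "v = pt i t"
    using vertex_eq_pt assms(1) by blast
  moreover have "t \<noteq> 0"
    using it v assms(2) pt_0_in_cuts by auto
  ultimately have "v \<in> gap i"
    unfolding gap_def by auto
  then show "v \<in> (\<Union>i<k. gap i)"
    using \<open>i < k\<close> by blast
qed

lemma local_part_cuts_Un: "i < k \<Longrightarrow> local_part (cuts \<union> R) i = local_part R i"
  unfolding local_part_def using pt_notin_cuts by auto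

lemma UN_pt_image:
  assumes A: "\<forall>j<k. A j \<subseteq> {1..gap_len j}"
  defines "S \<equiv> \<Union>j<k. pt j ` A j"
  shows "S \<subseteq> (\<Union>i<k. gap i)" and "S \<inter> cuts = {}"
    and "\<And>i. i < k \<Longrightarrow> local_part S i = A i"
proof -
  show "S \<subseteq> (\<Union>i<k. gap i)"
    unfolding S_def gap_def using A by blast
  show "S \<inter> cuts = {}"
    unfolding S_def using A pt_notin_cuts by fastforce
  show "local_part S i = A i" if i: "i < k" for i
  proof
    show "local_part S i \<subseteq> A i"
    proof
      fix t assume "t \<in> local_part S i"
      then obtain j t' where jt: "t \<in> {1..gap_len i}" "j < k" "t' \<in> A j" "pt i t = pt j t'"
        unfolding local_part_def S_def by auto
      then have "t' \<in> {1..gap_len j}"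
        using A by blast
      then show "t \<in> A i"
        using pt_inj[OF i jt(2), of t t'] jt by simp
    qed
    have "A i \<subseteq> {1..gap_len i}"
      using A i by blast
    then show "A i \<subseteq> local_part S i"
      using i unfolding local_part_def S_def by auto
  qed
qed

lemma local_configsD:
  assumes "c \<in> local_configs b i"
  shows "fst c \<subseteq> {1..gap_len i}" "snd c - {0} \<subseteq> {1..gap_len i}" "0 \<in> snd c"
    "fst c \<inter> snd c = {}" "card (fst c) = b i" "card (snd c - {0}) = b i"
proof -
  have c: "fst c \<subseteq> {..<gap_len i + 1}" "snd c \<subseteq> {..<gap_len i + 1}" "fst c \<inter> snd c = {}"
    "card (fst c) = b i" "card (snd c) = b i + 1" "0 \<in> snd c"
    using assms unfolding local_configs_def golf_configs_def by auto
  then show "fst c \<subseteq> {1..gap_len i}" "snd c - {0} \<subseteq> {1..gap_len i}"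
    by (auto simp: subset_eq Suc_le_eq)
  show "0 \<in> snd c" "fst c \<inter> snd c = {}" "card (fst c) = b i"
    using c by auto
  have "finite (snd c)"
    using c(2) finite_subset by blast
  then show "card (snd c - {0}) = b i"
    using c by simp
qed

lemma localize_in:
  assumes "c \<in> cut_configs Nb Nh b"
  shows "localize c \<in> (\<Pi>\<^sub>E i\<in>{..<k}. local_configs b i)"
proof -
  obtain B H where c: "c = (B, H)" "B \<inter> H = {}" "gap_counts b B H"
    using assms unfolding cut_configs_def golf_configs_def by auto
  have "(local_part B i, local_holes H i) \<in> local_configs b i" if i: "i < k" for i
  proof -
    have "card (local_part B i) = b i" "card (local_part H i) = b i"
      using c(3) card_Int_gap[OF i] i unfolding gap_counts_def by auto
    moreover have "0 \<notin> local_part H i" "local_part B i \<inter> local_holes H i = {}"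
      using c(2) unfolding local_part_def by auto
    ultimately show ?thesis
      unfolding local_configs_def golf_configs_def by (auto simp: local_part_def finite_local_part)
  qed
  then show ?thesis
    unfolding localize_def c by (simp add: restrict_PiE_iff)
qed

lemma globalize_localize:
  assumes c: "c \<in> cut_configs Nb Nh b"
  shows "globalize (localize c) = c"
proof -
  obtain B H where BH: "c = (B, H)" "B \<subseteq> {..<n}" "H \<subseteq> {..<n}" "B \<inter> H = {}" "cuts \<subseteq> H"
    using c unfolding cut_configs_def golf_configs_def gap_counts_def by auto
  have B: "(\<Union>i<k. pt i ` local_part B i) = B"
    using BH by (intro UN_pt_local_part subset_gaps) auto
  have "local_part (H - cuts) i = local_part H i" if "i < k" for i
    using pt_notin_cuts[OF that] unfolding local_part_def by auto
  then have "(\<Union>i<k. pt i ` local_part H i) = (\<Union>i<k. pt i ` local_part (H - cuts) i)"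
    by simp
  also have "\<dots> = H - cuts"
    using BH(3) by (intro UN_pt_local_part subset_gaps) auto
  finally have H: "(\<Union>i<k. pt i ` (local_holes H i - {0})) = H - cuts"
    by (simp add: local_part_def)
  show ?thesis
    unfolding globalize_def localize_def BH(1) using B H BH(5) by auto
qed

lemma localize_globalize:
  assumes f: "f \<in> (\<Pi>\<^sub>E i\<in>{..<k}. local_configs b i)"
  shows "localize (globalize f) = f"
proof -
  have fj: "f j \<in> local_configs b j" if "j < k" for j
    using f that by auto
  have "\<forall>j<k. fst (f j) \<subseteq> {1..gap_len j}" "\<forall>j<k. snd (f j) - {0} \<subseteq> {1..gap_len j}"
    using local_configsD(1,2)[OF fj] by blast+
  note local_parts = UN_pt_image(3)[OF this(1)] UN_pt_image(3)[OF this(2)]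
  have "(local_part (fst (globalize f)) i, local_holes (snd (globalize f)) i) = f i" if i: "i < k" for i
  proof -
    have "local_part (fst (globalize f)) i = fst (f i)"
      unfolding globalize_def fst_conv using local_parts(1)[OF i] .
    moreover have "local_part (snd (globalize f)) i = snd (f i) - {0}"
      unfolding globalize_def snd_conv local_part_cuts_Un[OF i]
      using local_parts(2)[OF i] .
    ultimately show ?thesis
      using local_configsD(3)[OF fj[OF i]] by (simp add: prod_eq_iff insert_absorb)
  qed
  then have "localize (globalize f) = restrict f {..<k}"
    unfolding localize_def by (intro restrict_ext) auto
  also have "\<dots> = f"
    using f by (rule PiE_restrict)
  finally show ?thesis .
qed

lemma disjoint_if_local_parts_disjoint:
  assumes "S \<subseteq> (\<Union>i<k. gap i)" "\<And>i. i < k \<Longrightarrow> local_part S i \<inter> local_part T i = {}"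
  shows "S \<inter> T = {}"
proof -
  have "v \<notin> T" if v: "v \<in> S" for v
  proof -
    obtain i where i: "i < k" "v \<in> gap i"
      using assms(1) v by blast
    then obtain t where "t \<in> {1..gap_len i}" "v = pt i t"
      unfolding gap_def by blast
    then show ?thesis
      using assms(2)[OF i(1)] v unfolding local_part_def by auto
  qed
  then show ?thesis
    by blast
qed

lemma globalize_in:
  assumes f: "f \<in> (\<Pi>\<^sub>E i\<in>{..<k}. local_configs b i)" and b: "(\<Sum>i<k. b i) = Nb" and Nh: "Nh = k + Nb"
  shows "globalize f \<in> cut_configs Nb Nh b"
proof -
  have fj: "f j \<in> local_configs b j" if "j < k" for j
    using f that by auto
  define B where "B = (\<Union>i<k. pt i ` fst (f i))"
  define R where "R = (\<Union>i<k. pt i ` (snd (f i) - {0}))"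
  have "\<forall>j<k. fst (f j) \<subseteq> {1..gap_len j}" "\<forall>j<k. snd (f j) - {0} \<subseteq> {1..gap_len j}"
    using local_configsD(1,2)[OF fj] by blast+
  note B_props = UN_pt_image[OF this(1), folded B_def] and R_props = UN_pt_image[OF this(2), folded R_def]
  have local_card: "card (local_part B i) = b i" "card (local_part R i) = b i" if "i < k" for i
    using that local_configsD(5,6)[OF fj[OF that]] B_props(3) R_props(3) by auto
  have "card B = Nb" "card R = Nb"
    using card_local_parts[OF B_props(1)] card_local_parts[OF R_props(1)] local_card b by simp_all
  have "R \<subseteq> {..<n}"
    using R_props(1) gaps_subset by blast
  then have "finite R" "finite cuts"
    unfolding cuts_def using finite_subset by auto
  then have "card (cuts \<union> R) = Nh"
    using card_Un_disjoint[of cuts R] R_props(2) card_cuts Nh \<open>card R = Nb\<close> by (simp add: Int_commute)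
  moreover have "B \<inter> (cuts \<union> R) = {}"
  proof -
    have "local_part B i \<inter> local_part R i = {}" if "i < k" for i
      using local_configsD(4)[OF fj[OF that]] B_props(3)[OF that] R_props(3)[OF that] by auto
    then show ?thesis
      using B_props(2) disjoint_if_local_parts_disjoint[OF B_props(1), of R] by blast
  qed
  moreover have "B \<subseteq> {..<n}" "cuts \<union> R \<subseteq> {..<n}"
    using B_props(1) R_props(1) gaps_subset cuts_subset by auto
  moreover have "gap_counts b B (cuts \<union> R)"
    unfolding gap_counts_def using local_card card_Int_gap local_part_cuts_Un by simp
  ultimately show ?thesis
    unfolding cut_configs_def golf_configs_def globalize_def B_def[symmetric] R_def[symmetric]
    using \<open>card B = Nb\<close> by simp
qed

lemma bij_betw_localize:
  assumes "(\<Sum>i<k. b i) = Nb" "Nh = k + Nb"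
  shows "bij_betw localize (cut_configs Nb Nh b) (\<Pi>\<^sub>E i\<in>{..<k}. local_configs b i)"
  by (rule bij_betwI[where g=globalize])
     (auto simp: localize_in globalize_in[OF _ assms] globalize_localize localize_globalize)

lemma finite_local_configs: "finite (local_configs b i)"
  unfolding local_configs_def using finite_golf_configs by simp

lemma golfCP_local_configs:
  assumes "0 \<le> p" "p \<le> 1"
  shows "golfCP (gap_len i + 1) (b i) (b i + 1) p (\<lambda>B H Y. Y = {0}) (\<lambda>B H Y. 0 \<in> H) =
    (\<Sum>c\<in>local_configs b i. final_holes_prob (gap_len i + 1) p (snd c) (fst c) {0}) / real (card (local_configs b i))"
  unfolding local_configs_def by (rule golfCP_final_holes_prob) (use assms in auto)

lemma sum_cut_configs_final_holes_prob:
  assumes "(\<Sum>i<k. b i) = Nb" "Nh = k + Nb"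
  shows "(\<Sum>c\<in>cut_configs Nb Nh b. final_holes_prob n p (snd c) (fst c) cuts) =
    (\<Prod>i<k. \<Sum>c\<in>local_configs b i. final_holes_prob (gap_len i + 1) p (snd c) (fst c) {0})"
proof -
  let ?G = "\<lambda>i c. final_holes_prob (gap_len i + 1) p (snd c) (fst c) {0}"
  have "(\<Sum>c\<in>cut_configs Nb Nh b. final_holes_prob n p (snd c) (fst c) cuts) =
      (\<Sum>c\<in>cut_configs Nb Nh b. \<Prod>i<k. ?G i (localize c i))"
  proof (rule sum.cong[OF refl])
    fix c assume "c \<in> cut_configs Nb Nh b"
    then have c: "fst c \<subseteq> {..<n}" "snd c \<subseteq> {..<n}" "cuts \<subseteq> snd c" "fst c \<inter> snd c = {}"
      unfolding cut_configs_def golf_configs_def gap_counts_def by auto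
    then have "fst c \<inter> cuts = {}" "finite (fst c)"
      using finite_subset by blast+
    with c have "final_holes_prob n p (snd c) (fst c) cuts = (\<Prod>i<k. local_final_prob p (snd c) (fst c) i)"
      by (intro final_holes_prob_factorizes subset_gaps)
    then show "final_holes_prob n p (snd c) (fst c) cuts = (\<Prod>i<k. ?G i (localize c i))"
      by (simp add: local_final_prob_def localize_def)
  qed
  also have "\<dots> = (\<Sum>f\<in>(\<Pi>\<^sub>E i\<in>{..<k}. local_configs b i). \<Prod>i<k. ?G i (f i))"
    by (rule sum.reindex_bij_betw[OF bij_betw_localize[OF assms]])
  also have "\<dots> = (\<Prod>i<k. \<Sum>c\<in>local_configs b i. ?G i c)"
    by (rule prod_sum_PiE[symmetric]) (simp_all add: finite_local_configs)
  finally show ?thesis .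
qed

theorem golfCP_factorizes:
  assumes p: "0 \<le> p" "p \<le> 1" and b: "(\<Sum>i<k. b i) = Nb" and Nh: "Nh = k + Nb"
  shows "golfCP n Nb Nh p (\<lambda>B H Y. Y = cuts) (\<lambda>B H Y. gap_counts b B H) =
    (\<Prod>i<k. golfCP (gap_len i + 1) (b i) (b i + 1) p (\<lambda>B H Y. Y = {0}) (\<lambda>B H Y. 0 \<in> H))"
proof -
  let ?G = "\<lambda>i c. final_holes_prob (gap_len i + 1) p (snd c) (fst c) {0}"
  have "Nb < Nh"
    using Nh k_ge_1 by simp
  have "real (card (cut_configs Nb Nh b)) = (\<Prod>i<k. real (card (local_configs b i)))"
    using bij_betw_same_card[OF bij_betw_localize[OF b Nh]] by (simp add: card_PiE)
  then have "golfCP n Nb Nh p (\<lambda>B H Y. Y = cuts) (\<lambda>B H Y. gap_counts b B H) =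
      (\<Prod>i<k. \<Sum>c\<in>local_configs b i. ?G i c) / (\<Prod>i<k. real (card (local_configs b i)))"
    using golfCP_final_holes_prob[OF n_ge_1 p \<open>Nb < Nh\<close>, of "gap_counts b" cuts]
      sum_cut_configs_final_holes_prob[OF b Nh, of p]
    by (simp add: cut_configs_def gap_counts_def)
  also have "\<dots> = (\<Prod>i<k. (\<Sum>c\<in>local_configs b i. ?G i c) / real (card (local_configs b i)))"
    by (rule prod_dividef[symmetric])
  also have "\<dots> = (\<Prod>i<k. golfCP (gap_len i + 1) (b i) (b i + 1) p (\<lambda>B H Y. Y = {0}) (\<lambda>B H Y. 0 \<in> H))"
    by (rule prod.cong[OF refl]) (rule golfCP_local_configs[OF p, symmetric])
  finally show ?thesis .
qed

end

section \<open>The cut points in canonical order\<close>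

lemma canon_pi_mod: "x < n \<Longrightarrow> canon_pi n x mod n = x"
  unfolding canon_pi_def by auto

lemma canon_pi_range: "x < n \<Longrightarrow> canon_pi n x \<in> {1..n}"
  unfolding canon_pi_def by auto

lemma canon_pi_of_mod: "c \<in> {1..n} \<Longrightarrow> canon_pi n (c mod n) = c"
  unfolding canon_pi_def by (cases "c = n") auto

lemma inj_on_canon_pi: "inj_on (canon_pi n) {..<n}"
  by (rule inj_onI) (auto simp: canon_pi_def split: if_splits)

lemma set_xlist:
  assumes "X \<subseteq> {..<n}"
  shows "set (xlist n X) = X"
proof -
  have "set (xlist n X) = (\<lambda>x. canon_pi n x mod n) ` X"
    unfolding xlist_def using finite_subset[OF assms] by (simp add: image_image)
  also have "\<dots> = X"
    using assms canon_pi_mod by (simp add: subset_eq)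
  finally show ?thesis .
qed

lemma length_xlist: "X \<subseteq> {..<n} \<Longrightarrow> length (xlist n X) = card X"
  unfolding xlist_def using finite_subset[of X "{..<n}"]
  by (simp add: card_image inj_on_subset[OF inj_on_canon_pi])

locale listed_points =
  fixes n k :: nat and X :: "nat set"
  assumes n_ge_1: "n \<ge> 1" and X_subset: "X \<subseteq> {..<n}" and card_X: "card X = k" and k_ge_1: "k \<ge> 1"
begin

definition canon_nth :: "nat \<Rightarrow> nat" where
  "canon_nth j = sorted_list_of_set (canon_pi n ` X) ! j"

text \<open>\<open>a i = \<pi>(x\<^sub>i)\<close> for \<open>1 \<le> i \<le> k\<close>, while \<open>a 0 = \<pi>(x\<^sub>k) - n\<close>.\<close>
definition a :: "nat \<Rightarrow> int" where
  "a i = (if i = 0 then int (canon_nth (k - 1)) - int n else int (canon_nth (i - 1)))"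

lemma length_sorted: "length (sorted_list_of_set (canon_pi n ` X)) = k"
  using length_xlist[OF X_subset] card_X unfolding xlist_def by simp

lemma xlist_nth: "j < k \<Longrightarrow> xlist n X ! j = canon_nth j mod n"
  unfolding xlist_def canon_nth_def using length_sorted by simp

lemma canon_nth_range: "j < k \<Longrightarrow> canon_nth j \<in> {1..n}"
proof -
  assume "j < k"
  then have "canon_nth j \<in> set (sorted_list_of_set (canon_pi n ` X))"
    unfolding canon_nth_def using length_sorted by simp
  then have "canon_nth j \<in> canon_pi n ` X"
    using finite_subset[OF X_subset] by simp
  then show ?thesis
    using canon_pi_range X_subset by auto
qed

lemma canon_nth_less: "i < j \<Longrightarrow> j < k \<Longrightarrow> canon_nth i < canon_nth j"
  unfolding canon_nth_def using length_sorted
  by (intro sorted_wrt_nth_less[OF strict_sorted_list_of_set]) simp_all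

sublocale cut_cycle n k a
proof
  show "n \<ge> 1" "k \<ge> 1"
    by (fact n_ge_1 k_ge_1)+
  show "a k = a 0 + int n"
    using k_ge_1 unfolding a_def by simp
  show "a i < a (Suc i)" if "i < k" for i
    using canon_nth_range[of "k - 1"] canon_nth_range[of 0] canon_nth_less[of "i - 1" i] k_ge_1 that
    unfolding a_def by auto
qed

lemma index_pred: "i < k \<Longrightarrow> (i + k - 1) mod k = (if i = 0 then k - 1 else i - 1)"
proof (cases "i = 0")
  case False
  assume "i < k"
  have "i + k - 1 = (i - 1) + k"
    using False by simp
  moreover have "((i - 1) + k) mod k = i - 1"
    using \<open>i < k\<close> by simp
  ultimately show ?thesis
    using False by simp
qed (use k_ge_1 in simp)

lemma xpt_eq: "i < k \<Longrightarrow> xpt n X i = canon_nth (if i = 0 then k - 1 else i - 1) mod n"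
  unfolding xpt_def card_X using index_pred xlist_nth k_ge_1 by auto

lemma canon_pi_xpt: "i < k \<Longrightarrow> int (canon_pi n (xpt n X i)) = a i + (if i = 0 then int n else 0)"
proof -
  assume i: "i < k"
  then have "canon_nth (if i = 0 then k - 1 else i - 1) \<in> {1..n}"
    using canon_nth_range k_ge_1 by auto
  from canon_pi_of_mod[OF this] show ?thesis
    unfolding xpt_eq[OF i] a_def by simp
qed

lemma canon_pi_xpt_Suc: "i < k \<Longrightarrow> int (canon_pi n (xpt n X ((i + 1) mod card X))) = a (Suc i)"
proof (cases "Suc i < k")
  case False
  moreover assume "i < k"
  ultimately have "Suc i = k"
    by simp
  then show ?thesis
    using canon_pi_xpt[of 0] k_ge_1 card_X unfolding a_def by simp
qed (use canon_pi_xpt card_X a_def in simp)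

lemma xpt_eq_vertex: "i < k \<Longrightarrow> xpt n X i = vertex n (a i)"
  using n_ge_1 by (simp add: xpt_eq a_def vertex_def zmod_int[symmetric])

lemma Delta_eq_gap_len: "i < k \<Longrightarrow> Delta n X i = gap_len i"
proof -
  assume i: "i < k"
  have "(a (Suc i) - (a i + (if i = 0 then int n else 0)) - 1) mod int n = (a (Suc i) - a i - 1) mod int n"
  proof (cases "i = 0")
    case True
    then have "a (Suc i) - (a i + (if i = 0 then int n else 0)) - 1 = a (Suc i) - a i - 1 - int n"
      by simp
    then show ?thesis
      by (simp only: minus_mod_self2)
  qed simp
  also have "\<dots> = a (Suc i) - a i - 1"
    using a_le[of 0 i] a_le[of "Suc i" k] a_k a_less_Suc[OF i] i by (intro mod_pos_pos_trivial) auto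
  finally show ?thesis
    unfolding Delta_def gap_len_def canon_pi_xpt_Suc[OF i] canon_pi_xpt[OF i] by simp
qed

lemma block_eq_gap: "i < k \<Longrightarrow> block n X i = gap i"
proof -
  assume i: "i < k"
  have "(xpt n X i + j) mod n = pt i j" for j
  proof -
    have "int ((xpt n X i + j) mod n) = (a i mod int n + int j) mod int n"
      using xpt_eq_vertex[OF i] int_vertex[OF n_ge_1] by (simp add: zmod_int)
    also have "\<dots> = (a i + int j) mod int n"
      by (rule mod_add_left_eq)
    finally show ?thesis
      unfolding pt_def vertex_def by simp
  qed
  then show ?thesis
    unfolding block_def gap_def Delta_eq_gap_len[OF i] by auto
qed

lemma cuts_eq_X: "cuts = X"
proof -
  have "inj_on (\<lambda>i. (i + k - 1) mod k) {..<k}"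
  proof (rule inj_onI)
    fix i j assume "i \<in> {..<k}" "j \<in> {..<k}" "(i + k - 1) mod k = (j + k - 1) mod k"
    then have "(if i = 0 then k - 1 else i - 1) = (if j = 0 then k - 1 else j - 1)"
      using index_pred by simp
    then show "i = j"
      using \<open>i \<in> {..<k}\<close> \<open>j \<in> {..<k}\<close> by (auto split: if_splits)
  qed
  then have index: "(\<lambda>i. (i + k - 1) mod k) ` {..<k} = {..<k}"
    using k_ge_1 by (intro endo_inj_surj) auto
  have "cuts = xpt n X ` {..<k}"
    unfolding cuts_def using xpt_eq_vertex by simp
  also have "\<dots> = (\<lambda>j. xlist n X ! j) ` ((\<lambda>i. (i + k - 1) mod k) ` {..<k})"
    unfolding xpt_def card_X image_image ..
  also have "\<dots> = set (xlist n X)"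
    unfolding index using length_xlist[OF X_subset] card_X by (auto simp: in_set_conv_nth)
  also have "\<dots> = X"
    by (rule set_xlist[OF X_subset])
  finally show ?thesis .
qed

end

theorem mainTheorem11:
  fixes n Nb Nh :: nat and p :: real and X :: "nat set" and b :: "nat \<Rightarrow> nat"
  assumes "n \<ge> 1" and "Nb \<le> Nh" and "Nb + Nh \<le> n"
    and "0 \<le> p" and "p \<le> 1"
    and "Nh - Nb > 0"
    and "X \<subseteq> {..<n}" and "card X = Nh - Nb"
    and "(\<Sum>i<Nh - Nb. b i) = Nb"
    and "\<forall>i<Nh - Nb. 2 * b i \<le> Delta n X i"
  shows "golfCP n Nb Nh p (\<lambda>B H Y. Y = X)
           (\<lambda>B H Y. X \<subseteq> H \<and> (\<forall>i<Nh - Nb. card (B \<inter> block n X i) = b i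
                                            \<and> card (H \<inter> block n X i) = b i))
         = (\<Prod>i<Nh - Nb. golfCP (Delta n X i + 1) (b i) (b i + 1) p (\<lambda>B H Y. Y = {0})
                                   (\<lambda>B H Y. 0 \<in> H))
       \<and> (\<Prod>i<Nh - Nb. golfCP (Delta n X i + 1) (b i) (b i + 1) p (\<lambda>B H Y. Y = {0})
                                   (\<lambda>B H Y. 0 \<in> H))
         = (\<Prod>i<Nh - Nb. 1 / real (b i + 1))"
proof
  interpret listed_points n "Nh - Nb" X
    using assms(1,6-8) by unfold_locales auto
  have gap_counts_eq: "(\<lambda>B H Y. X \<subseteq> H \<and>
        (\<forall>i<Nh - Nb. card (B \<inter> block n X i) = b i \<and> card (H \<inter> block n X i) = b i))
      = (\<lambda>B H Y. gap_counts b B H)"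
    by (simp add: gap_counts_def cuts_eq_X block_eq_gap cong: conj_cong)
  have "golfCP n Nb Nh p (\<lambda>B H Y. Y = X) (\<lambda>B H Y. gap_counts b B H)
    = (\<Prod>i<Nh - Nb. golfCP (Delta n X i + 1) (b i) (b i + 1) p (\<lambda>B H Y. Y = {0}) (\<lambda>B H Y. 0 \<in> H))"
    using golfCP_factorizes[OF assms(4,5,9)] assms(2) by (simp add: cuts_eq_X Delta_eq_gap_len)
  then show "golfCP n Nb Nh p (\<lambda>B H Y. Y = X)
      (\<lambda>B H Y. X \<subseteq> H \<and> (\<forall>i<Nh - Nb. card (B \<inter> block n X i) = b i \<and> card (H \<inter> block n X i) = b i))
    = (\<Prod>i<Nh - Nb. golfCP (Delta n X i + 1) (b i) (b i + 1) p (\<lambda>B H Y. Y = {0}) (\<lambda>B H Y. 0 \<in> H))"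
    unfolding gap_counts_eq .
  show "(\<Prod>i<Nh - Nb. golfCP (Delta n X i + 1) (b i) (b i + 1) p (\<lambda>B H Y. Y = {0}) (\<lambda>B H Y. 0 \<in> H))
    = (\<Prod>i<Nh - Nb. 1 / real (b i + 1))"
    using golfCP_single_gap assms(4,5,10) by (intro prod.cong) auto
qed

end
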